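(* Let $\gamma>1$ be a real number such that $\gamma\ne\psi_L^r$ for every $r\in\mathbb{Q}$ and every admissible tuple $L$, where $\psi_L$ is the dominant zero associated with $L$. Let $K_n=\lfloor\gamma^n\rfloor$. Then $K$ satisfies absolute Benford's Law.
   Context: An admissible tuple is $L=(a_1,\dots,a_N)\in\mathbb{N}_0^N$ with $N\ge2$, $a_1>0$; $\psi_L$ is the unique positive real zero of $x^N-\sum_{k=1}^{N-1}a_kx^{N-k}-(1+a_N)$ and $\theta=\psi_L^{-1}$. For such $L$: $\Theta=(a_1,\dots,a_N,a_1,\dots,a_N,\dots)$; $\mathcal H^\circ$ is the set of finite tuples $\epsilon$ (length $n$, empty tuple included) such that either $\epsilon=\Theta|n$ or there is $0\le s<n$ with $(\epsilon(1),\dots,\epsilon(s))=\Theta|s$, $\epsilon(s+1)<\Theta(s+1)$ and $(\epsilon(s+2),\dots,\epsilon(n))\in\mathcal H^\circ$; $\mathcal H=\{\epsilon\in\mathcal H^\circ:\epsilon(1)>0\}$. $H$: $H_n=1+\sum_{k=1}^{n-1}a_kH_{n-k}$ ($1\le n\le N+1$), $H_{n+N}=a_1H_{n+N-1}+\dots+a_{N-1}H_{n+1}+(1+a_N)H_n$; each $m\in\mathbb{N}$ is uniquely $m=\sum_{k=1}^M\epsilon(k)H_{M-k+1}$ with $\epsilon\in\mathcal H$ of length $M$. $\mathrm{LB}_s(m)$ is $(\epsilon(1),\dots,\epsilon(s))$ if $N\le s\le M$, $(\epsilon(1),\dots,\epsilon(s),0,\dots,0)$ (length $N$) if $s<N$,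 $s\le M$, undefined if $s>M$. $\mathcal H_s$: the set of values of $\mathrm{LB}_s$, listed $\mathbf b_1,\dots,\mathbf b_\ell$ lexicographically; exclusive block $\mathbf b_{\ell+1}$: if $s\ge N$, $s\equiv p\pmod N$, $0\le p<N$, its first $s-p$ entries are $\Theta|(s-p)$ with the last of these replaced by $1+a_N$ and its last $p$ entries are $0$; if $s<N$, $\mathbf b_{\ell+1}=(a_1,\dots,a_{N-1},1+a_N)$; $\widetilde{\mathbf b_k}=\mathbf b_{k+1}$; $\mathbf b\cdot\widehat H=\sum_k\mathbf b(k)\theta^{k-1}$. $K$ satisfies strong Benford's Law under $\mathcal H$-expansion if for all $s\in\mathbb{N}$ and $\mathbf b\in\mathcal H_s$, $\lim_n\#\{k\le n:\mathrm{LB}_s(K_k)=\mathbf b\}/n=\log_{\psi_L}(\widetilde{\mathbf b}\cdot\widehat H/\mathbf b\cdot\widehat H)$. $K$ satisfies absolute Benford's Law if it satisfies strong Benford's Law under $\mathcal H$-expansion for every admissible $L$. *)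

theory Defs
  imports Complex_Main "HOL-Library.List_Lexorder"
begin

text \<open>An admissible tuple L = (a_1,...,a_N) is a list of naturals with a_k = L ! (k-1).\<close>

definition admissible :: "nat list \<Rightarrow> bool" where
  "admissible L \<longleftrightarrow> length L \<ge> 2 \<and> L ! 0 > 0"

definition psiL :: "nat list \<Rightarrow> real" where
  "psiL L = (THE x. x > 0 \<and>
     x ^ length L - (\<Sum>k=1..length L - 1. real (L ! (k - 1)) * x ^ (length L - k))
       - (1 + real (L ! (length L - 1))) = 0)"

definition thetaL :: "nat list \<Rightarrow> real" where
  "thetaL L = inverse (psiL L)"

text \<open>Theta = (a_1,...,a_N,a_1,...,a_N,...), 1-based: Theta(k) for k \<ge> 1.\<close>
definition Theta :: "nat list \<Rightarrow> nat \<Rightarrow> nat" where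
  "Theta L k = L ! ((k - 1) mod length L)"

definition Theta_pref :: "nat list \<Rightarrow> nat \<Rightarrow> nat list" where
  "Theta_pref L n = map (Theta L) [1..<Suc n]"

inductive_set Hcirc :: "nat list \<Rightarrow> nat list set" for L :: "nat list" where
  full: "Theta_pref L n \<in> Hcirc L"
| step: "\<lbrakk> c < Theta L (Suc s); rest \<in> Hcirc L \<rbrakk>
          \<Longrightarrow> Theta_pref L s @ c # rest \<in> Hcirc L"

definition Hset :: "nat list \<Rightarrow> nat list set" where
  "Hset L = {e \<in> Hcirc L. e \<noteq> [] \<and> e ! 0 > 0}"

text \<open>The fundamental sequence H_1, H_2, ...: Hlist L m = [H_1, ..., H_m].\<close>
primrec Hlist :: "nat list \<Rightarrow> nat \<Rightarrow> nat list" where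
  "Hlist L 0 = []"
| "Hlist L (Suc m) =
     (let prev = Hlist L m; n = Suc m; N = length L in
      prev @ [if n \<le> N + 1
              then 1 + (\<Sum>k=1..n - 1. L ! (k - 1) * prev ! (n - k - 1))
              else (\<Sum>k=1..N - 1. L ! (k - 1) * prev ! (n - k - 1))
                   + (1 + L ! (N - 1)) * prev ! (n - N - 1)])"

definition Hseq :: "nat list \<Rightarrow> nat \<Rightarrow> nat" where
  "Hseq L n = Hlist L n ! (n - 1)"

definition Hexp :: "nat list \<Rightarrow> nat \<Rightarrow> nat list" where
  "Hexp L m = (THE e. e \<in> Hset L \<and>
      m = (\<Sum>k=1..length e. e ! (k - 1) * Hseq L (length e - k + 1)))"

text \<open>Leading block LB_s(m); None means undefined.\<close>
definition LB :: "nat list \<Rightarrow> nat \<Rightarrow> nat \<Rightarrow> nat list option" where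
  "LB L s m = (let e = Hexp L m; M = length e; N = length L in
     if s > M then None
     else if N \<le> s then Some (take s e)
     else Some (take s e @ replicate (N - s) 0))"

definition Hs :: "nat list \<Rightarrow> nat \<Rightarrow> nat list set" where
  "Hs L s = {b. \<exists>m \<ge> 1. LB L s m = Some b}"

definition excl_block :: "nat list \<Rightarrow> nat \<Rightarrow> nat list" where
  "excl_block L s = (let N = length L in
     if N \<le> s then
       (let p = s mod N in
        butlast (Theta_pref L (s - p)) @ [1 + L ! (N - 1)] @ replicate p 0)
     else butlast L @ [1 + L ! (N - 1)])"

definition next_block :: "nat list \<Rightarrow> nat \<Rightarrow> nat list \<Rightarrow> nat list" where
  "next_block L s b = (if {b' \<in> Hs L s. b < b'} \<noteq> {}
                        then Min {b' \<in> Hs L s. b < b'} else excl_block L s)"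

definition dotH :: "nat list \<Rightarrow> nat list \<Rightarrow> real" where
  "dotH L b = (\<Sum>k<length b. real (b ! k) * thetaL L ^ k)"

definition strong_benford :: "nat list \<Rightarrow> (nat \<Rightarrow> nat) \<Rightarrow> bool" where
  "strong_benford L K \<longleftrightarrow>
     (\<forall>s \<ge> 1. \<forall>b \<in> Hs L s.
        (\<lambda>n. real (card {k \<in> {1..n}. LB L s (K k) = Some b}) / real n)
          \<longlonglongrightarrow> log (psiL L) (dotH L (next_block L s b) / dotH L b))"

definition absolute_benford :: "(nat \<Rightarrow> nat) \<Rightarrow> bool" where
  "absolute_benford K \<longleftrightarrow> (\<forall>L. admissible L \<longrightarrow> strong_benford L K)"

end

theory Submission
  imports Defs "HOL-Analysis.Kronecker_Approximation_Theorem"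
begin

(* Write m = K_k in its H-expansion, of length M.  Since H_M is asymptotic to c psi^M, the
   leading block of m is determined by the ratio m / H_M in [1, psi): for large M, the block is b
   whenever m / H_M lies strictly between b.H' and b~.H' (H' = (1, theta, theta^2, ...)).
   On the logarithmic scale, log_psi (K_k / H_M) equals, up to o(1), the fractional part of
   k log_psi gamma - log_psi c, and log_psi gamma is irrational by hypothesis.  The orbit of an
   irrational rotation visits every interval at least in proportion to its length (shown here
   from Kronecker's approximation theorem), so each block b occurs with lower frequency at least
   log_psi (b~.H' / b.H').  These lengths telescope to log_psi psi = 1, and lower bounds on
   frequencies that sum to 1 are already their limits. *)

lemma sum_lessThan_add_split:
  fixes f :: "nat \<Rightarrow> 'a::comm_monoid_add"
  shows "(\<Sum>i<m + n. f i) = (\<Sum>i<m. f i) + (\<Sum>i<n. f (m + i))"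
  by (induction n) (auto simp: add.assoc)

lemma sum_atLeastAtMost_split_last:
  fixes f :: "nat \<Rightarrow> 'a::comm_monoid_add"
  assumes "1 \<le> n"
  shows "(\<Sum>i=1..n. f i) = (\<Sum>i=1..n - 1. f i) + f n"
proof -
  obtain n' where n: "n = Suc n'" using assms by (cases n) auto
  show ?thesis unfolding n using sum.nat_ivl_Suc'[of 1 n' f] by (simp add: add.commute)
qed

lemma append_less_append_same_length:
  fixes u v :: "'a::order list"
  assumes "length u = length v" "u < v"
  shows "u @ x < v @ y"
  using assms
proof (induction u arbitrary: v)
  case (Cons a u)
  then obtain b v' where "v = b # v'" by (cases v) auto
  then show ?case using Cons by auto
qed simp

lemma append_less_append_same_lengthD:
  fixes u v :: "'a::order list"
  assumes "length u = length v" "u @ x < v @ x"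
  shows "u < v"
  using assms
proof (induction u arbitrary: v)
  case (Cons a u)
  then obtain b v' where "v = b # v'" by (cases v) auto
  then show ?case using Cons by auto
qed simp

lemma append_le_append_same_length:
  fixes u v :: "'a::order list"
  shows "length u = length v \<Longrightarrow> u \<le> v \<Longrightarrow> u @ x \<le> v @ x"
  using append_less_append_same_length[of u v x x] by (auto simp: le_less)

lemma append_le_append_left:
  fixes x y :: "'a::order list"
  shows "length x = length y \<Longrightarrow> x \<le> y \<Longrightarrow> u @ x \<le> u @ y"
  by (induction u) auto

lemma replicate_zero_le: "length y = n \<Longrightarrow> replicate n 0 \<le> (y :: nat list)"
proof (induction y arbitrary: n)
  case (Cons a y)
  then show ?case by (cases a) auto
qed simp

lemma sum_next_diff_telescope:
  fixes S :: "'a::linorder set" and g :: "'a \<Rightarrow> real"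
  assumes "finite S" "S \<noteq> {}"
  shows "(\<Sum>b\<in>S. g (if {b'\<in>S. b < b'} \<noteq> {} then Min {b'\<in>S. b < b'} else X) - g b)
           = g X - g (Min S)"
  using assms
proof (induction "card S" arbitrary: S rule: less_induct)
  case less
  define a where "a = Min S"
  define S' where "S' = S - {a}"
  have aS: "a \<in> S" using less.prems unfolding a_def by simp
  have a_less: "\<And>b. b \<in> S' \<Longrightarrow> a < b" using less.prems unfolding a_def S'_def
    by (metis Diff_iff Min_le order_le_neq_trans singletonI)
  have S: "S = insert a S'" "finite S'" "a \<notin> S'" using aS less.prems unfolding S'_def by auto
  define next_in where
    "next_in T b = g (if {b'\<in>T. b < b'} \<noteq> {} then Min {b'\<in>T. b < b'} else X) - g b" for T b
  have "{b'\<in>S. b < b'} = {b'\<in>S'. b < b'}" if "b \<in> S'" for b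
    using a_less[OF that] S by auto
  then have "(\<Sum>b\<in>S'. next_in S b) = (\<Sum>b\<in>S'. next_in S' b)"
    unfolding next_in_def by (intro sum.cong) auto
  then have sum: "(\<Sum>b\<in>S. next_in S b) = next_in S a + (\<Sum>b\<in>S'. next_in S' b)"
    using S by simp
  have above_a: "{b'\<in>S. a < b'} = S'" using a_less S by auto
  show ?case
  proof (cases "S' = {}")
    case True
    then show ?thesis using sum above_a unfolding next_in_def a_def by simp
  next
    case False
    have "card S' < card S" using S by simp
    then have "(\<Sum>b\<in>S'. next_in S' b) = g X - g (Min S')"
      using less.hyps S(2) False unfolding next_in_def by blast
    then show ?thesis using sum above_a False unfolding next_in_def a_def by simp
  qed
qed

lemma tendsto_of_frequency_lower_bounds:
  fixes c :: "'a \<Rightarrow> nat \<Rightarrow> real" and p :: "'a \<Rightarrow> real"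
  assumes B: "finite B" "b \<in> B" and p_sum: "(\<Sum>b\<in>B. p b) = 1"
    and c_sum: "\<And>n. (\<Sum>b\<in>B. c b n) \<le> 1"
    and lower: "\<And>b \<epsilon>. b \<in> B \<Longrightarrow> \<epsilon> > 0 \<Longrightarrow> eventually (\<lambda>n. p b - \<epsilon> \<le> c b n) sequentially"
  shows "(\<lambda>n. c b n) \<longlonglongrightarrow> p b"
proof (rule order_tendstoI)
  fix y assume y: "y < p b"
  then have "eventually (\<lambda>n. p b - (p b - y) / 2 \<le> c b n) sequentially"
    using lower[OF B(2)] by simp
  then show "eventually (\<lambda>n. y < c b n) sequentially"
    by (rule eventually_mono) (use y in \<open>simp add: field_simps\<close>)
next
  fix y assume y: "p b < y"
  define \<epsilon> where "\<epsilon> = (y - p b) / (real (card B) + 1)"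
  have \<epsilon>: "\<epsilon> > 0" using y unfolding \<epsilon>_def by simp
  have "eventually (\<lambda>n. \<forall>b'\<in>B. p b' - \<epsilon> \<le> c b' n) sequentially"
    using lower \<epsilon> B(1) by (intro eventually_ball_finite) auto
  then show "eventually (\<lambda>n. c b n < y) sequentially"
  proof (rule eventually_mono)
    fix n assume low: "\<forall>b'\<in>B. p b' - \<epsilon> \<le> c b' n"
    have "(\<Sum>b'\<in>B - {b}. p b' - \<epsilon>) \<le> (\<Sum>b'\<in>B - {b}. c b' n)"
      using low by (intro sum_mono) auto
    moreover have "(\<Sum>b'\<in>B - {b}. p b' - \<epsilon>) = 1 - p b - real (card B - 1) * \<epsilon>"
      using p_sum B by (simp add: sum_subtractf sum.remove)
    moreover have "c b n + (\<Sum>b'\<in>B - {b}. c b' n) \<le> 1"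
      using c_sum[of n] B by (simp add: sum.remove)
    moreover have "real (card B - 1) * \<epsilon> < y - p b"
    proof -
      have "real (card B - 1) * \<epsilon> \<le> real (card B) * \<epsilon>" using \<epsilon> by (intro mult_right_mono) auto
      also have "\<dots> < (real (card B) + 1) * \<epsilon>" using \<epsilon> by simp
      also have "\<dots> = y - p b" unfolding \<epsilon>_def by simp
      finally show ?thesis .
    qed
    ultimately show "c b n < y" by linarith
  qed
qed

lemma sum_card_fibres_le:
  assumes "finite B"
  shows "(\<Sum>b\<in>B. card {k\<in>{1..n}. f k = Some b}) \<le> n"
proof -
  have "(\<Sum>b\<in>B. card {k\<in>{1..n}. f k = Some b}) = card (\<Union>b\<in>B. {k\<in>{1..n}. f k = Some b})"
    using assms by (intro card_UN_disjoint[symmetric]) auto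
  also have "\<dots> \<le> card {1..n}" by (intro card_mono) auto
  finally show ?thesis by simp
qed

lemma card_lessThan_le_of_eventually_imp:
  assumes "\<And>k. k0 < k \<Longrightarrow> P k \<Longrightarrow> Q k"
  shows "card {k\<in>{..<n}. P k} \<le> Suc k0 + card {k\<in>{1..n}. Q k}"
proof -
  have "card {k\<in>{..<n}. P k} \<le> card ({..<Suc k0} \<union> {k\<in>{1..n}. Q k})"
    using assms by (intro card_mono) (auto simp: not_less_eq)
  also have "\<dots> \<le> Suc k0 + card {k\<in>{1..n}. Q k}" using card_Un_le[of "{..<Suc k0}"] by simp
  finally show ?thesis .
qed

section \<open>Averaging recurrences\<close>

locale averaging_recurrence =
  fixes u :: "nat \<Rightarrow> real" and w :: "nat \<Rightarrow> real" and N j0 :: nat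
  assumes N_ge_1: "N \<ge> 1"
    and w_nonneg: "\<And>i. 1 \<le> i \<Longrightarrow> i \<le> N \<Longrightarrow> w i \<ge> 0"
    and w_sum: "(\<Sum>i=1..N. w i) = 1"
    and w_1: "w 1 > 0" and w_N: "w N > 0"
    and j0_ge_N: "j0 \<ge> N"
    and rec: "\<And>j. j \<ge> j0 \<Longrightarrow> u j = (\<Sum>i=1..N. w i * u (j - i))"
begin

lemma lower_bound_step:
  assumes j: "j \<ge> j0" and lo: "\<And>k. j - N \<le> k \<Longrightarrow> k < j \<Longrightarrow> lo \<le> u k"
  shows "lo \<le> u j"
proof -
  have "lo = (\<Sum>i=1..N. w i * lo)" using w_sum by (simp add: sum_distrib_right[symmetric])
  also have "\<dots> \<le> (\<Sum>i=1..N. w i * u (j - i))"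
  proof (rule sum_mono)
    fix i assume i: "i \<in> {1..N}"
    have "lo \<le> u (j - i)" using i j j0_ge_N by (intro lo) auto
    then show "w i * lo \<le> w i * u (j - i)" using w_nonneg i by (intro mult_left_mono) auto
  qed
  finally show ?thesis using rec[OF j] by simp
qed

lemma lower_bound_persists:
  assumes "n + N \<ge> j0" and "\<And>k. n \<le> k \<Longrightarrow> k < n + N \<Longrightarrow> lo \<le> u k" and "k \<ge> n"
  shows "lo \<le> u k"
  using assms(3)
proof (induction k rule: less_induct)
  case (less k)
  show ?case
  proof (cases "k < n + N")
    case True then show ?thesis using less assms(2) by simp
  next
    case False
    show ?thesis
    proof (rule lower_bound_step)
      show "k \<ge> j0" using False assms(1) by simp
      fix k' assume "k - N \<le> k'" "k' < k"
      then show "lo \<le> u k'" using less False by simp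
    qed
  qed
qed

lemma excess_ge_weighted_excess:
  assumes j: "j \<ge> j0" and lo: "\<And>k. j - N \<le> k \<Longrightarrow> k < j \<Longrightarrow> lo \<le> u k"
    and i: "1 \<le> i" "i \<le> N"
  shows "w i * (u (j - i) - lo) \<le> u j - lo"
proof -
  have "u j - lo = (\<Sum>i=1..N. w i * (u (j - i) - lo))"
    using rec[OF j] w_sum by (simp add: right_diff_distrib sum_subtractf sum_distrib_right[symmetric])
  also have "\<dots> \<ge> w i * (u (j - i) - lo)"
  proof (rule member_le_sum)
    fix x assume x: "x \<in> {1..N} - {i}"
    have "lo \<le> u (j - x)" using x j j0_ge_N by (intro lo) auto
    then show "0 \<le> w x * (u (j - x) - lo)" using w_nonneg[of x] x by simp
  qed (use i in simp_all)
  finally show ?thesis .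
qed

lemma w_le_1:
  assumes "1 \<le> i" "i \<le> N"
  shows "w i \<le> 1"
proof -
  have "w i \<le> (\<Sum>i=1..N. w i)" by (rule member_le_sum) (use assms w_nonneg in auto)
  then show ?thesis using w_sum by simp
qed

text \<open>An excess d of u n over a lower bound on the window [n, n + N) is passed on, damped by
  at most w N once and then by w 1 per step, to the whole next window.\<close>

lemma lower_bound_gain:
  assumes n: "n + N \<ge> j0" and lo: "\<And>k. n \<le> k \<Longrightarrow> k < n + N \<Longrightarrow> lo \<le> u k"
    and un: "lo + d \<le> u n" and d: "d \<ge> 0"
    and k: "n + N \<le> k" "k < n + 2 * N"
  shows "lo + w 1 ^ (N - 1) * w N * d \<le> u k"
proof -
  have lo_all: "\<And>k. n \<le> k \<Longrightarrow> lo \<le> u k" using lower_bound_persists[OF n lo] by blast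
  have gain: "w 1 ^ t * w N * d \<le> u (n + N + t) - lo" if "t < N" for t
    using that
  proof (induction t)
    case 0
    have "w N * (u (n + N - N) - lo) \<le> u (n + N) - lo"
      by (rule excess_ge_weighted_excess) (use n lo_all N_ge_1 in auto)
    moreover have "w N * d \<le> w N * (u n - lo)" using un w_N by (intro mult_left_mono) auto
    ultimately show ?case by simp
  next
    case (Suc t)
    have "w 1 * (u (n + N + Suc t - 1) - lo) \<le> u (n + N + Suc t) - lo"
      by (rule excess_ge_weighted_excess) (use n lo_all N_ge_1 in auto)
    moreover have "w 1 * (w 1 ^ t * w N * d) \<le> w 1 * (u (n + N + t) - lo)"
      using Suc w_1 by (intro mult_left_mono) auto
    ultimately show ?case by (simp add: mult.assoc)
  qed
  define t where "t = k - (n + N)"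
  have t: "k = n + N + t" "t < N" using k unfolding t_def by auto
  have "w 1 ^ (N - 1) \<le> w 1 ^ t"
    using t w_1 w_le_1[of 1] N_ge_1 by (intro power_decreasing) auto
  then have "w 1 ^ (N - 1) * w N * d \<le> w 1 ^ t * w N * d"
    using w_N d by (intro mult_right_mono) auto
  then show ?thesis using gain[OF t(2)] t(1) by simp
qed

end

lemma averaging_recurrence_uminus:
  "averaging_recurrence u w N j0 \<Longrightarrow> averaging_recurrence (\<lambda>j. - u j) w N j0"
  unfolding averaging_recurrence_def by (auto simp: sum_negf)

context averaging_recurrence
begin

definition contraction :: real where "contraction = w 1 ^ (N - 1) * w N / 2"

lemma contraction_pos: "contraction > 0"
  unfolding contraction_def using w_1 w_N by simp

lemma contraction_le: "contraction \<le> 1 / 2"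
proof -
  have "w 1 ^ (N - 1) \<le> 1" using w_1 w_le_1[of 1] N_ge_1 by (intro power_le_one) auto
  moreover have "w N \<le> 1" using w_le_1[of N] N_ge_1 by simp
  ultimately have "w 1 ^ (N - 1) * w N \<le> 1" using w_N w_1 by (intro mult_le_one) auto
  then show ?thesis unfolding contraction_def by simp
qed

lemma upper_bound_persists:
  assumes "n + N \<ge> j0" and "\<And>k. n \<le> k \<Longrightarrow> k < n + N \<Longrightarrow> u k \<le> hi" and "k \<ge> n"
  shows "u k \<le> hi"
  using averaging_recurrence.lower_bound_persists[OF averaging_recurrence_uminus[OF
      averaging_recurrence_axioms], of n "- hi" k] assms by simp

text \<open>Whichever half of [lo, hi] contains u n, the bound on the other side improves.\<close>

lemma window_contracts:
  assumes n: "n + N \<ge> j0" and b: "\<And>k. n \<le> k \<Longrightarrow> k < n + N \<Longrightarrow> lo \<le> u k \<and> u k \<le> hi"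
  shows "\<exists>lo' hi'. lo \<le> lo' \<and> hi' - lo' \<le> (1 - contraction) * (hi - lo) \<and>
     (\<forall>k. n + N \<le> k \<longrightarrow> k < n + N + N \<longrightarrow> lo' \<le> u k \<and> u k \<le> hi')"
proof -
  have lo_all: "lo \<le> u k" and hi_all: "u k \<le> hi" if "n \<le> k" for k
    using lower_bound_persists[OF n _ that, of lo] upper_bound_persists[OF n _ that, of hi] b
    by auto
  define D where "D = hi - lo"
  have D: "D \<ge> 0" using b[of n] N_ge_1 unfolding D_def by simp
  have gain: "contraction * D = w 1 ^ (N - 1) * w N * (D / 2)" unfolding contraction_def by simp
  show ?thesis
  proof (cases "lo + D / 2 \<le> u n")
    case True
    have "lo + contraction * D \<le> u k" if "n + N \<le> k" "k < n + N + N" for k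
      unfolding gain by (rule lower_bound_gain[OF n _ True]) (use b D that in auto)
    then show ?thesis using hi_all contraction_pos D
      by (intro exI[of _ "lo + contraction * D"] exI[of _ hi]) (auto simp: D_def algebra_simps)
  next
    case False
    then have "- hi + D / 2 \<le> - u n" unfolding D_def by (simp add: field_simps)
    then have "- hi + contraction * D \<le> - u k" if "n + N \<le> k" "k < n + N + N" for k
      unfolding gain
      using averaging_recurrence.lower_bound_gain[OF averaging_recurrence_uminus[OF
          averaging_recurrence_axioms] n, of "- hi" "D / 2" k] b D that by auto
    then show ?thesis using lo_all contraction_pos D
      by (intro exI[of _ lo] exI[of _ "hi - contraction * D"]) (auto simp: D_def algebra_simps)
  qed
qed

lemma window_contracts_iterated:
  assumes n0: "n0 + N \<ge> j0"
    and b: "\<And>k. n0 \<le> k \<Longrightarrow> k < n0 + N \<Longrightarrow> lo0 \<le> u k \<and> u k \<le> hi0"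
  shows "\<exists>lo hi. lo0 \<le> lo \<and> hi - lo \<le> (1 - contraction) ^ t * (hi0 - lo0) \<and>
     (\<forall>k. n0 + t * N \<le> k \<longrightarrow> lo \<le> u k \<and> u k \<le> hi)"
proof -
  have "\<exists>lo hi. lo0 \<le> lo \<and> hi - lo \<le> (1 - contraction) ^ t * (hi0 - lo0) \<and>
     (\<forall>k. n0 + t * N \<le> k \<longrightarrow> k < n0 + t * N + N \<longrightarrow> lo \<le> u k \<and> u k \<le> hi)"
  proof (induction t)
    case 0 then show ?case using b by (intro exI[of _ lo0] exI[of _ hi0]) auto
  next
    case (Suc t)
    then obtain lo hi where lh: "lo0 \<le> lo" "hi - lo \<le> (1 - contraction) ^ t * (hi0 - lo0)"
      "\<forall>k. n0 + t * N \<le> k \<longrightarrow> k < n0 + t * N + N \<longrightarrow> lo \<le> u k \<and> u k \<le> hi" by blast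
    have "n0 + t * N + N \<ge> j0" using n0 by simp
    from window_contracts[OF this] lh(3) obtain lo' hi' where
      l': "lo \<le> lo'" "hi' - lo' \<le> (1 - contraction) * (hi - lo)"
      "\<forall>k. n0 + t * N + N \<le> k \<longrightarrow> k < n0 + t * N + N + N \<longrightarrow> lo' \<le> u k \<and> u k \<le> hi'" by blast
    have "(1 - contraction) * (hi - lo) \<le> (1 - contraction) * ((1 - contraction) ^ t * (hi0 - lo0))"
      using lh(2) contraction_le by (intro mult_left_mono) auto
    then show ?case using l' lh(1)
      by (intro exI[of _ lo'] exI[of _ hi']) (auto simp: algebra_simps)
  qed
  then obtain lo hi where lh: "lo0 \<le> lo" "hi - lo \<le> (1 - contraction) ^ t * (hi0 - lo0)"
    "\<forall>k. n0 + t * N \<le> k \<longrightarrow> k < n0 + t * N + N \<longrightarrow> lo \<le> u k \<and> u k \<le> hi" by blast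
  have "n0 + t * N + N \<ge> j0" using n0 by simp
  then have "\<forall>k. n0 + t * N \<le> k \<longrightarrow> lo \<le> u k \<and> u k \<le> hi"
    using lower_bound_persists[of "n0 + t * N" lo] upper_bound_persists[of "n0 + t * N" hi] lh(3)
    by auto
  then show ?thesis using lh by blast
qed

lemma convergent_ge:
  assumes n0: "n0 + N \<ge> j0"
    and b: "\<And>k. n0 \<le> k \<Longrightarrow> k < n0 + N \<Longrightarrow> lo0 \<le> u k \<and> u k \<le> hi0"
  shows "\<exists>c. u \<longlonglongrightarrow> c \<and> c \<ge> lo0"
proof -
  note windows = window_contracts_iterated[OF n0 b]
  have "(\<lambda>t. (1 - contraction) ^ t * (hi0 - lo0)) \<longlonglongrightarrow> 0"
    using contraction_pos contraction_le by (intro tendsto_mult_left_zero LIMSEQ_power_zero) auto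
  have "Cauchy u"
  proof (rule metric_CauchyI)
    fix e :: real assume e: "e > 0"
    have "eventually (\<lambda>t. (1 - contraction) ^ t * (hi0 - lo0) < e) sequentially"
      using \<open>(\<lambda>t. _) \<longlonglongrightarrow> 0\<close> e by (rule order_tendstoD)
    then obtain t where t: "(1 - contraction) ^ t * (hi0 - lo0) < e"
      unfolding eventually_sequentially by blast
    obtain lo hi where lh: "hi - lo \<le> (1 - contraction) ^ t * (hi0 - lo0)"
      "\<forall>k. n0 + t * N \<le> k \<longrightarrow> lo \<le> u k \<and> u k \<le> hi" using windows by blast
    show "\<exists>M. \<forall>m\<ge>M. \<forall>n\<ge>M. dist (u m) (u n) < e"
    proof (intro exI[of _ "n0 + t * N"] allI impI)
      fix m n assume "n0 + t * N \<le> m" "n0 + t * N \<le> n"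
      then have "lo \<le> u m" "u m \<le> hi" "lo \<le> u n" "u n \<le> hi" using lh(2) by auto
      then show "dist (u m) (u n) < e" using lh(1) t by (simp add: dist_real_def abs_le_iff)
    qed
  qed
  then obtain c where c: "u \<longlonglongrightarrow> c" using Cauchy_convergent convergent_def by blast
  obtain lo hi where "lo0 \<le> lo" "\<forall>k. n0 \<le> k \<longrightarrow> lo \<le> u k \<and> u k \<le> hi"
    using windows[of 0] by auto
  then have "lo0 \<le> c" using LIMSEQ_le_const[OF c, of lo0] by (meson order_trans)
  then show ?thesis using c by blast
qed

end

section \<open>Interval counts for irrational rotations\<close>

text \<open>Cells of width d = frac (q \<alpha>) partition [0, 1); adding q to k moves the orbit point
  frac (k \<alpha> + \<beta>) by exactly d, so all full cells are visited about equally often.\<close>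

locale rotation_cells =
  fixes \<alpha> \<beta> :: real and q :: nat
  assumes q_pos: "q > 0" and frac_q_pos: "frac (real q * \<alpha>) > 0"
begin

definition d :: real where "d = frac (real q * \<alpha>)"
definition orbit :: "nat \<Rightarrow> real" where "orbit k = frac (real k * \<alpha> + \<beta>)"
definition cell :: "nat \<Rightarrow> nat" where "cell k = nat \<lfloor>orbit k / d\<rfloor>"
definition R :: nat where "R = nat \<lfloor>1 / d\<rfloor>"
definition cell_count :: "nat \<Rightarrow> nat \<Rightarrow> nat" where
  "cell_count n i = card {k\<in>{..<n}. cell k = i}"

lemma d_pos: "d > 0" and d_less_1: "d < 1"
  using frac_q_pos unfolding d_def by (auto simp: frac_lt_1)

lemma orbit_bounds: "0 \<le> orbit k" "orbit k < 1"
  unfolding orbit_def by (auto simp: frac_lt_1)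

lemma orbit_shift: "orbit (k + i * q) = frac (orbit k + real i * d)"
proof -
  have "real (k + i * q) * \<alpha> + \<beta> =
      (orbit k + real i * d) + of_int (\<lfloor>real k * \<alpha> + \<beta>\<rfloor> + int i * \<lfloor>real q * \<alpha>\<rfloor>)"
    unfolding orbit_def d_def frac_def by (simp add: algebra_simps)
  then show ?thesis unfolding orbit_def by (simp only: frac_add_of_int_right)
qed

lemma cell_eq_iff: "cell k = i \<longleftrightarrow> real i * d \<le> orbit k \<and> orbit k < (real i + 1) * d"
proof -
  have "cell k = i \<longleftrightarrow> \<lfloor>orbit k / d\<rfloor> = int i" unfolding cell_def
    using orbit_bounds d_pos by (auto simp: nat_eq_iff)
  also have "\<dots> \<longleftrightarrow> real i \<le> orbit k / d \<and> orbit k / d < real i + 1" by (simp add: floor_eq_iff)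
  also have "\<dots> \<longleftrightarrow> real i * d \<le> orbit k \<and> orbit k < (real i + 1) * d"
    using d_pos by (simp add: field_simps)
  finally show ?thesis .
qed

lemma R_bounds: "real R * d \<le> 1" "1 < (real R + 1) * d"
proof -
  have R: "real R = of_int \<lfloor>1 / d\<rfloor>" unfolding R_def using d_pos by simp
  have fl: "of_int \<lfloor>1 / d\<rfloor> \<le> 1 / d" "1 / d < of_int \<lfloor>1 / d\<rfloor> + 1" by linarith+
  have "of_int \<lfloor>1 / d\<rfloor> * d \<le> (1 / d) * d" using fl(1) d_pos by (intro mult_right_mono) auto
  then show "real R * d \<le> 1" unfolding R using d_pos by simp
  have "(1 / d) * d < (of_int \<lfloor>1 / d\<rfloor> + 1) * d"
    using fl(2) d_pos by (intro mult_strict_right_mono) auto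
  then show "1 < (real R + 1) * d" unfolding R using d_pos by simp
qed

lemma cell_le_R: "cell k \<le> R"
proof -
  have "orbit k / d \<le> 1 / d" by (intro divide_right_mono) (use orbit_bounds[of k] d_pos in auto)
  then show ?thesis unfolding cell_def R_def by (intro nat_mono floor_mono)
qed

lemma cell_shift_up: "cell k = 0 \<Longrightarrow> (real i + 1) * d \<le> 1 \<Longrightarrow> cell (k + i * q) = i"
proof -
  assume c: "cell k = 0" and i: "(real i + 1) * d \<le> 1"
  have pk: "0 \<le> orbit k" "orbit k < d" using c cell_eq_iff[of k 0] by auto
  have "orbit k + real i * d < 1" using pk i by (simp add: algebra_simps)
  then have "orbit (k + i * q) = orbit k + real i * d" using orbit_shift pk d_pos by (simp add: frac_eq)
  then show ?thesis unfolding cell_eq_iff using pk by (simp add: algebra_simps)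
qed

lemma cell_shift_down: "cell k = i \<Longrightarrow> k \<ge> i * q \<Longrightarrow> cell (k - i * q) = 0"
proof -
  assume c: "cell k = i" and k: "k \<ge> i * q"
  define k' where "k' = k - i * q"
  have pk: "real i * d \<le> orbit k" "orbit k < (real i + 1) * d" using c cell_eq_iff by auto
  define m where "m = \<lfloor>orbit k' + real i * d\<rfloor>"
  have "orbit k = frac (orbit k' + real i * d)" using orbit_shift[of k' i] k unfolding k'_def by simp
  then have m: "orbit k' = orbit k - real i * d + of_int m" unfolding m_def frac_def by simp
  have "of_int m > (-1::real)" "of_int m < (1::real)"
    using m orbit_bounds[of k'] pk d_pos d_less_1 by (simp_all add: algebra_simps)
  then have "m = 0" by simp
  then have "0 \<le> orbit k'" "orbit k' < d" using m pk by (simp_all add: algebra_simps)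
  then show ?thesis unfolding k'_def[symmetric] cell_eq_iff by simp
qed

lemma cell_count_le: "cell_count n i \<le> cell_count n 0 + i * q"
proof -
  have "{k\<in>{..<n}. cell k = i} \<subseteq> {..<i * q} \<union> (\<lambda>k. k + i * q) ` {k\<in>{..<n}. cell k = 0}"
  proof
    fix k assume k: "k \<in> {k\<in>{..<n}. cell k = i}"
    show "k \<in> {..<i * q} \<union> (\<lambda>k. k + i * q) ` {k\<in>{..<n}. cell k = 0}"
    proof (cases "k < i * q")
      case False
      then have "cell (k - i * q) = 0" using k cell_shift_down by auto
      moreover have "k = (k - i * q) + i * q" using False by simp
      ultimately show ?thesis using k by (intro UnI2 image_eqI[of _ _ "k - i * q"]) auto
    qed simp
  qed
  then have "cell_count n i \<le> card ({..<i * q} \<union> (\<lambda>k. k + i * q) ` {k\<in>{..<n}. cell k = 0})"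
    unfolding cell_count_def by (intro card_mono) auto
  also have "\<dots> \<le> card {..<i * q} + card ((\<lambda>k. k + i * q) ` {k\<in>{..<n}. cell k = 0})"
    by (rule card_Un_le)
  also have "\<dots> \<le> i * q + cell_count n 0"
    unfolding cell_count_def using card_image_le[of "{k\<in>{..<n}. cell k = 0}" "\<lambda>k. k + i * q"]
    by simp
  finally show ?thesis by simp
qed

lemma cell_count_ge: "(real i + 1) * d \<le> 1 \<Longrightarrow> cell_count n 0 \<le> cell_count n i + i * q"
proof -
  assume i: "(real i + 1) * d \<le> 1"
  have "(\<lambda>k. k + i * q) ` {k\<in>{..<n}. cell k = 0} \<subseteq> {k\<in>{..<n}. cell k = i} \<union> {n..<n + i * q}"
    using cell_shift_up[OF _ i] by auto
  then have "card ((\<lambda>k. k + i * q) ` {k\<in>{..<n}. cell k = 0})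
      \<le> card ({k\<in>{..<n}. cell k = i} \<union> {n..<n + i * q})"
    by (intro card_mono) auto
  also have "\<dots> \<le> cell_count n i + i * q"
    unfolding cell_count_def using card_Un_le[of "{k\<in>{..<n}. cell k = i}" "{n..<n + i * q}"] by simp
  finally show ?thesis unfolding cell_count_def by (simp add: card_image inj_on_def)
qed

lemma sum_cell_count: "(\<Sum>i\<le>R. cell_count n i) = n"
proof -
  have U: "(\<Union>i\<in>{..R}. {k\<in>{..<n}. cell k = i}) = {..<n}" using cell_le_R by auto
  have "(\<Sum>i\<le>R. cell_count n i) = card (\<Union>i\<in>{..R}. {k\<in>{..<n}. cell k = i})"
    unfolding cell_count_def by (rule card_UN_disjoint[symmetric]) auto
  then show ?thesis unfolding U by simp
qed

lemma cell_count_0_lower: "real n / (real R + 1) - real R * real q \<le> real (cell_count n 0)"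
proof -
  have "real n = (\<Sum>i\<le>R. real (cell_count n i))" using sum_cell_count[of n] by (metis of_nat_sum)
  also have "\<dots> \<le> (\<Sum>i\<le>R. real (cell_count n 0) + real R * real q)"
  proof (rule sum_mono)
    fix i assume "i \<in> {..R}"
    then have "real i * real q \<le> real R * real q" by (simp add: mult_right_mono)
    then show "real (cell_count n i) \<le> real (cell_count n 0) + real R * real q"
      using cell_count_le[of n i] by (metis of_nat_add of_nat_le_iff of_nat_mult add_left_mono order_trans)
  qed
  also have "\<dots> = (real R + 1) * (real (cell_count n 0) + real R * real q)" by simp
  finally show ?thesis by (simp add: field_simps)
qed

lemma cell_count_lower:
  assumes i: "(real i + 1) * d \<le> 1"
  shows "real n / (real R + 1) - 2 * real R * real q \<le> real (cell_count n i)"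
proof -
  have "real i \<le> real R"
  proof (rule ccontr)
    assume "\<not> real i \<le> real R"
    then have "(real R + 1) * d \<le> (real i + 1) * d" using d_pos by (intro mult_right_mono) auto
    then show False using R_bounds(2) i by linarith
  qed
  then have "real i * real q \<le> real R * real q" by (intro mult_right_mono) auto
  moreover have "real (cell_count n 0) \<le> real (cell_count n i) + real i * real q"
    using cell_count_ge[OF i, of n] by (metis of_nat_add of_nat_le_iff of_nat_mult)
  ultimately show ?thesis using cell_count_0_lower[of n] by linarith
qed

lemma sum_cell_count_le_card_interval:
  assumes "finite I" and inside: "\<And>i. i \<in> I \<Longrightarrow> a \<le> real i * d \<and> (real i + 1) * d \<le> b"
  shows "(\<Sum>i\<in>I. cell_count n i) \<le> card {k\<in>{..<n}. a \<le> orbit k \<and> orbit k \<le> b}"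
proof -
  have "(\<Sum>i\<in>I. cell_count n i) = card (\<Union>i\<in>I. {k\<in>{..<n}. cell k = i})"
    unfolding cell_count_def using assms(1) by (intro card_UN_disjoint[symmetric]) auto
  also have "\<dots> \<le> card {k\<in>{..<n}. a \<le> orbit k \<and> orbit k \<le> b}"
  proof (rule card_mono)
    show "(\<Union>i\<in>I. {k\<in>{..<n}. cell k = i}) \<subseteq> {k\<in>{..<n}. a \<le> orbit k \<and> orbit k \<le> b}"
    proof
      fix k assume "k \<in> (\<Union>i\<in>I. {k\<in>{..<n}. cell k = i})"
      then obtain i where i: "i \<in> I" "k < n" "cell k = i" by auto
      then show "k \<in> {k\<in>{..<n}. a \<le> orbit k \<and> orbit k \<le> b}"
        using inside[OF i(1)] cell_eq_iff[of k i] by auto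
    qed
  qed simp
  finally show ?thesis .
qed

lemma card_orbit_interval_lower:
  assumes ab: "0 \<le> a" "a \<le> b" "b \<le> 1" and wide: "(b - a) / d \<ge> 2"
  shows "((b - a) / d - 2) * (real n / (real R + 1) - 2 * real R * real q)
           \<le> real (card {k\<in>{..<n}. a \<le> orbit k \<and> orbit k \<le> b})"
proof -
  define i0 where "i0 = nat \<lceil>a / d\<rceil>"
  define i1 where "i1 = nat \<lfloor>b / d\<rfloor>"
  define X where "X = real n / (real R + 1) - 2 * real R * real q"
  have "a / d \<ge> 0" "b / d \<ge> 0" using ab d_pos by simp_all
  then have i0: "real i0 \<le> a / d + 1" "a / d \<le> real i0"
    and i1: "b / d - 1 \<le> real i1" "real i1 \<le> b / d"
    unfolding i0_def i1_def by linarith+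
  have inside: "a \<le> real i * d \<and> (real i + 1) * d \<le> b" if "i \<in> {i0..<i1}" for i
  proof -
    have "real i0 \<le> real i" "real i + 1 \<le> real i1" using that by auto
    then have "real i0 * d \<le> real i * d" "(real i + 1) * d \<le> real i1 * d"
      using d_pos by (auto intro: mult_right_mono)
    moreover have "a \<le> real i0 * d" "real i1 * d \<le> b" using i0(2) i1(2) d_pos by (auto simp: field_simps)
    ultimately show ?thesis by linarith
  qed
  have "X \<le> real (cell_count n i)" if "i \<in> {i0..<i1}" for i
  proof -
    have "(real i + 1) * d \<le> 1" using inside[OF that] ab by linarith
    then show ?thesis unfolding X_def by (rule cell_count_lower)
  qed
  then have "real (card {i0..<i1}) * X \<le> (\<Sum>i\<in>{i0..<i1}. real (cell_count n i))"
    using sum_mono[of "{i0..<i1}" "\<lambda>_. X"] by simp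
  also have "\<dots> \<le> real (card {k\<in>{..<n}. a \<le> orbit k \<and> orbit k \<le> b})"
  proof -
    have "(\<Sum>i\<in>{i0..<i1}. cell_count n i) \<le> card {k\<in>{..<n}. a \<le> orbit k \<and> orbit k \<le> b}"
      using inside by (intro sum_cell_count_le_card_interval) auto
    then show ?thesis by (metis of_nat_le_iff of_nat_sum)
  qed
  finally have cells: "real (card {i0..<i1}) * X \<le> real (card {k\<in>{..<n}. a \<le> orbit k \<and> orbit k \<le> b})" .
  have "(b - a) / d - 2 \<le> real (card {i0..<i1})" using i0 i1 by (simp add: diff_divide_distrib)
  then have "((b - a) / d - 2) * X \<le> real (card {k\<in>{..<n}. a \<le> orbit k \<and> orbit k \<le> b})"
    using cells wide mult_right_mono[of "(b - a) / d - 2" "real (card {i0..<i1})" X]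
      mult_nonneg_nonpos[of "(b - a) / d - 2" X] by (cases "X \<ge> 0") linarith+
  then show ?thesis unfolding X_def .
qed

lemma interval_rate_lower:
  assumes ab: "a \<le> b" "b \<le> 1 + a" and wide: "(b - a) / d \<ge> 2" and d: "d < \<eta> / 8"
  shows "real n * (b - a - \<eta> / 2) \<le> ((b - a) / d - 2) * (real n / (real R + 1))"
proof -
  define A where "A = (b - a) / d - 2"
  have A: "A \<ge> 0" "A * d = b - a - 2 * d" unfolding A_def using wide d_pos by (auto simp: field_simps)
  have "real R + 1 \<le> (1 + d) / d" using R_bounds d_pos by (simp add: field_simps)
  then have "real n / ((1 + d) / d) \<le> real n / (real R + 1)"
    using d_pos by (intro divide_left_mono) (auto intro!: mult_pos_pos divide_pos_pos)
  then have "real n * d / (1 + d) \<le> real n / (real R + 1)" using d_pos by (simp add: field_simps)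
  then have "A * (real n * d / (1 + d)) \<le> A * (real n / (real R + 1))"
    using A by (intro mult_left_mono) auto
  moreover have "A * (real n * d / (1 + d)) = real n * ((A * d) / (1 + d))" by simp
  then have "A * (real n * d / (1 + d)) = real n * ((b - a - 2 * d) / (1 + d))"
    unfolding A(2) .
  moreover have "b - a - \<eta> / 2 \<le> (b - a - 2 * d) / (1 + d)"
  proof -
    have "(b - a) * d \<le> d" using ab d_pos by (simp add: mult_le_cancel_right1)
    moreover have "\<eta> * d \<ge> 0" using d d_pos by simp
    moreover have "(b - a - \<eta> / 2) * (1 + d) = (b - a) + (b - a) * d - \<eta> / 2 - (\<eta> * d) / 2"
      by (simp add: algebra_simps)
    ultimately have "(b - a - \<eta> / 2) * (1 + d) \<le> b - a - 2 * d" using d d_pos by linarith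
    then show ?thesis using d_pos by (simp add: field_simps)
  qed
  then have "real n * (b - a - \<eta> / 2) \<le> real n * ((b - a - 2 * d) / (1 + d))"
    by (intro mult_left_mono) auto
  ultimately show ?thesis unfolding A_def by linarith
qed

end

theorem irrational_orbit_interval_count:
  fixes \<alpha> \<beta> a b \<eta> :: real
  assumes irr: "\<alpha> \<notin> \<rat>" and ab: "0 \<le> a" "a \<le> b" "b \<le> 1" and \<eta>: "\<eta> > 0"
  shows "eventually (\<lambda>n. real n * (b - a - \<eta>) \<le>
           real (card {k\<in>{..<n}. a \<le> frac (real k * \<alpha> + \<beta>) \<and> frac (real k * \<alpha> + \<beta>) \<le> b}))
         sequentially"
proof (cases "b - a \<le> \<eta>")
  case True
  then have "real n * (b - a - \<eta>) \<le> 0" for n by (simp add: mult_nonneg_nonpos)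
  then show ?thesis by (intro always_eventually allI) (meson of_nat_0_le_iff order_trans)
next
  case False
  obtain q where q: "q > 0" "\<bar>frac (real q * \<alpha>) - \<eta> / 16\<bar> < \<eta> / 16"
    using Kronecker_approx_1_explicit[OF irr, of "\<eta> / 16" "\<eta> / 16"] \<eta> False ab by auto
  then have "- (\<eta> / 16) < frac (real q * \<alpha>) - \<eta> / 16 \<and> frac (real q * \<alpha>) - \<eta> / 16 < \<eta> / 16"
    by (simp only: abs_less_iff) auto
  then have fq: "0 < frac (real q * \<alpha>)" "frac (real q * \<alpha>) < \<eta> / 8" by linarith+
  interpret rotation_cells \<alpha> \<beta> q using q fq by unfold_locales auto
  have d: "d < \<eta> / 8" using fq d_def by simp
  have wide: "(b - a) / d \<ge> 2" using False d d_pos by (simp add: field_simps)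
  define K where "K = ((b - a) / d - 2) * (2 * real R * real q)"
  have "eventually (\<lambda>n. real n \<ge> 2 * K / \<eta>) sequentially"
    by (rule eventually_sequentiallyI[of "nat \<lceil>2 * K / \<eta>\<rceil>"]) linarith
  then show ?thesis
  proof (rule eventually_mono)
    fix n assume n: "real n \<ge> 2 * K / \<eta>"
    have "K \<le> real n * (\<eta> / 2)" using n \<eta> by (simp add: field_simps)
    moreover have "((b - a) / d - 2) * (real n / (real R + 1)) - K
        \<le> real (card {k\<in>{..<n}. a \<le> orbit k \<and> orbit k \<le> b})"
      using card_orbit_interval_lower[OF ab wide, of n] unfolding K_def by (simp add: algebra_simps)
    ultimately show "real n * (b - a - \<eta>) \<le>
        real (card {k\<in>{..<n}. a \<le> frac (real k * \<alpha> + \<beta>) \<and> frac (real k * \<alpha> + \<beta>) \<le> b})"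
      using interval_rate_lower[OF ab(2) _ wide d, of n] ab unfolding orbit_def
      by (simp add: algebra_simps)
  qed
qed

section \<open>The fundamental sequence\<close>

lemma length_Hlist [simp]: "length (Hlist L m) = m"
  by (induction m) (auto simp: Let_def)

lemma take_Hlist: "m \<le> m' \<Longrightarrow> take m (Hlist L m') = Hlist L m"
proof (induction m' arbitrary: m)
  case (Suc m')
  show ?case
  proof (cases "m = Suc m'")
    case False
    then have "m \<le> m'" using Suc by simp
    then show ?thesis using Suc.IH[of m] by (simp add: Let_def)
  qed (metis length_Hlist order.refl take_all)
qed simp

lemma nth_Hlist: "i < m \<Longrightarrow> Hlist L m ! i = Hseq L (Suc i)"
proof -
  assume "i < m"
  have "Hlist L m ! i = take (Suc i) (Hlist L m) ! i" by simp
  also have "\<dots> = Hlist L (Suc i) ! i" using \<open>i < m\<close> take_Hlist[of "Suc i" m L] by simp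
  finally show ?thesis by (simp add: Hseq_def)
qed

lemma Hseq_Suc_unfold:
  "Hseq L (Suc m) = (let prev = Hlist L m; n = Suc m; N = length L in
     if n \<le> N + 1 then 1 + (\<Sum>k=1..n - 1. L ! (k - 1) * prev ! (n - k - 1))
     else (\<Sum>k=1..N - 1. L ! (k - 1) * prev ! (n - k - 1)) + (1 + L ! (N - 1)) * prev ! (n - N - 1))"
proof -
  have "(xs @ [x]) ! (Suc m - 1) = x" if "length xs = m" for xs :: "nat list" and x
    using that by (simp add: nth_append)
  then show ?thesis unfolding Hseq_def Hlist.simps(2) Let_def by simp
qed

lemma Hseq_Suc_initial:
  assumes "Suc m \<le> length L + 1"
  shows "Hseq L (Suc m) = 1 + (\<Sum>k=1..m. L ! (k - 1) * Hseq L (Suc m - k))"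
proof -
  have "(\<Sum>k=1..m. L ! (k - 1) * Hlist L m ! (Suc m - k - 1)) =
      (\<Sum>k=1..m. L ! (k - 1) * Hseq L (Suc m - k))"
    by (intro sum.cong) (auto simp: nth_Hlist Suc_diff_le)
  then show ?thesis using assms unfolding Hseq_Suc_unfold Let_def by simp
qed

lemma Hseq_Suc_recurrence:
  assumes "length L > 0" "\<not> Suc m \<le> length L + 1"
  shows "Hseq L (Suc m) = (\<Sum>k=1..length L - 1. L ! (k - 1) * Hseq L (Suc m - k))
                   + (1 + L ! (length L - 1)) * Hseq L (Suc m - length L)"
proof -
  have "(\<Sum>k=1..length L - 1. L ! (k - 1) * Hlist L m ! (Suc m - k - 1)) =
      (\<Sum>k=1..length L - 1. L ! (k - 1) * Hseq L (Suc m - k))"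
    using assms by (intro sum.cong) (auto simp: nth_Hlist Suc_diff_le)
  moreover have "Hlist L m ! (Suc m - length L - 1) = Hseq L (Suc m - length L)"
    using assms by (subst nth_Hlist) (auto simp: Suc_diff_le)
  ultimately show ?thesis using assms unfolding Hseq_Suc_unfold Let_def by simp
qed

locale admissible_tuple =
  fixes L :: "nat list"
  assumes admissible: "admissible L"
begin

abbreviation N :: nat where "N \<equiv> length L"
abbreviation H :: "nat \<Rightarrow> nat" where "H \<equiv> Hseq L"

text \<open>The periodic sequence Theta, indexed from 0.\<close>

definition Th :: "nat \<Rightarrow> nat" where "Th i = L ! (i mod N)"

lemma N_ge_2: "N \<ge> 2" and N_pos: "N > 0"
  using admissible by (auto simp: admissible_def)

lemma Th_0_pos: "Th 0 > 0"
  using admissible by (simp add: admissible_def Th_def)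

lemma Th_less: "i < N \<Longrightarrow> Th i = L ! i"
  by (simp add: Th_def)

lemma Th_add_period: "Th (j * N + i) = Th i"
  unfolding Th_def by (simp add: mod_mult_self3)

lemma Th_mem: "Th i \<in> set L"
  unfolding Th_def using N_pos by simp

lemma L_eq_map_Th: "L = map Th [0..<N]"
  by (rule nth_equalityI) (auto simp: Th_less)

lemma Theta_pref_eq: "Theta_pref L n = map Th [0..<n]"
proof -
  have "Theta_pref L n = map (Theta L) (map Suc [0..<n])"
    unfolding Theta_pref_def by (simp add: map_Suc_upt)
  then show ?thesis by (simp add: Theta_def Th_def)
qed

lemma Theta_Suc: "Theta L (Suc s) = Th s"
  by (simp add: Theta_def Th_def)

text \<open>The period-N recurrence for H, unfolded all the way down: H (n + 1) - 1 is the value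
  of the string Theta|n.\<close>

lemma H_Suc_eq: "H (Suc n) = 1 + (\<Sum>i<n. Th i * H (n - i))"
proof (induction n rule: less_induct)
  case (less n)
  show ?case
  proof (cases "Suc n \<le> N + 1")
    case True
    have "H (Suc n) = 1 + (\<Sum>k=1..n. L ! (k - 1) * H (Suc n - k))"
      using True by (rule Hseq_Suc_initial)
    also have "\<dots> = 1 + (\<Sum>i<n. Th i * H (n - i))"
      unfolding One_nat_def sum.atLeast1_atMost_eq using True by (auto simp: Th_less intro!: sum.cong)
    finally show ?thesis .
  next
    case False
    define t where "t = n - N"
    have t: "n = N + t" "t < n" using False N_pos unfolding t_def by auto
    have IH: "H (Suc t) = 1 + (\<Sum>i<t. Th i * H (t - i))" using less[OF t(2)] .
    have "H (Suc n) = (\<Sum>k=1..N - 1. L ! (k - 1) * H (Suc n - k)) + (1 + L ! (N - 1)) * H (Suc t)"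
      using Hseq_Suc_recurrence[OF N_pos False] t by simp
    also have "(\<Sum>k=1..N - 1. L ! (k - 1) * H (Suc n - k)) = (\<Sum>i<N - 1. Th i * H (n - i))"
      unfolding One_nat_def sum.atLeast1_atMost_eq by (auto simp: Th_less intro!: sum.cong)
    finally have rec: "H (Suc n) = (\<Sum>i<N - 1. Th i * H (n - i)) + (1 + L ! (N - 1)) * H (Suc t)" .
    have "{..<N} = insert (N - 1) {..<N - 1}" using N_pos by auto
    then have "(\<Sum>i<N. Th i * H (n - i)) = (\<Sum>i<N - 1. Th i * H (n - i)) + Th (N - 1) * H (n - (N - 1))"
      by simp
    moreover have "n - (N - 1) = Suc t" using t N_ge_2 by arith
    ultimately have first: "(\<Sum>i<N. Th i * H (n - i)) = (\<Sum>i<N - 1. Th i * H (n - i)) + L ! (N - 1) * H (Suc t)"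
      using N_pos by (simp add: Th_less)
    have "(\<Sum>i<n. Th i * H (n - i)) = (\<Sum>i<N. Th i * H (n - i)) + (\<Sum>i<t. Th (N + i) * H (n - (N + i)))"
      unfolding t(1) by (rule sum_lessThan_add_split)
    also have "(\<Sum>i<t. Th (N + i) * H (n - (N + i))) = (\<Sum>i<t. Th i * H (t - i))"
      using Th_add_period[of 1] by (auto simp: t(1) intro!: sum.cong)
    finally have "(\<Sum>i<n. Th i * H (n - i)) = (\<Sum>i<N - 1. Th i * H (n - i)) + L ! (N - 1) * H (Suc t) + (H (Suc t) - 1)"
      using first IH by simp
    moreover have "H (Suc t) \<ge> 1" using IH by simp
    ultimately show ?thesis using rec by simp
  qed
qed

lemma H_Suc_ge_1: "H (Suc n) \<ge> 1"
  using H_Suc_eq[of n] by simp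

lemma H_1: "H 1 = 1"
  using H_Suc_eq[of 0] by simp

lemma H_Suc_Suc_gt: "H (Suc n) < H (Suc (Suc n))"
proof -
  have "Th 0 * H (Suc n) \<le> (\<Sum>i<Suc n. Th i * H (Suc n - i))"
    using member_le_sum[of 0 "{..<Suc n}" "\<lambda>i. Th i * H (Suc n - i)"] by simp
  moreover have "H (Suc n) \<le> Th 0 * H (Suc n)" using Th_0_pos by simp
  ultimately show ?thesis using H_Suc_eq[of "Suc n"] by linarith
qed

lemma H_strict_mono: "1 \<le> m \<Longrightarrow> m < n \<Longrightarrow> H m < H n"
proof (induction n)
  case (Suc n)
  then obtain k where k: "n = Suc k" by (cases n) auto
  then show ?case using Suc H_Suc_Suc_gt[of k] by (cases "m = n") auto
qed simp

lemma H_mono: "1 \<le> m \<Longrightarrow> m \<le> n \<Longrightarrow> H m \<le> H n"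
  using H_strict_mono by (cases "m = n") (auto intro: less_imp_le)

lemma H_Suc_ge: "H (Suc n) \<ge> Suc n"
proof (induction n)
  case (Suc n) then show ?case using H_Suc_Suc_gt[of n] by linarith
qed (use H_Suc_ge_1[of 0] in simp)

end

section \<open>H-expansions\<close>

lemma add_mult_less_add_mult:
  fixes v h x x' v' :: nat
  assumes "v < h" "x < x'"
  shows "x * h + v < x' * h + v'"
proof -
  have "x * h + v < (x + 1) * h" using assms(1) by simp
  also have "\<dots> \<le> x' * h" using assms(2) by (intro mult_right_mono) auto
  finally show ?thesis by simp
qed

lemma upt_add_Suc_Cons: "[j..<j + Suc n] = j # [Suc j..<Suc j + n]"
  by (simp add: upt_conv_Cons del: upt_Suc)

context admissible_tuple
begin

text \<open>Hcirc_from j e: e is admissible when compared with Theta shifted by j; after a digit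
  below Theta the comparison restarts at phase 0.  Hcirc L is the case j = 0.\<close>

inductive Hcirc_from :: "nat \<Rightarrow> nat list \<Rightarrow> bool" where
  from_Nil: "Hcirc_from j []"
| from_less: "c < Th j \<Longrightarrow> Hcirc_from 0 r \<Longrightarrow> Hcirc_from j (c # r)"
| from_Th: "Hcirc_from (Suc j) r \<Longrightarrow> Hcirc_from j (Th j # r)"

lemma Hcirc_from_map_Th: "Hcirc_from j (map Th [j..<j + n])"
proof (induction n arbitrary: j)
  case (Suc n)
  have "Hcirc_from j (Th j # map Th [Suc j..<Suc j + n])" by (rule from_Th) (rule Suc.IH)
  then show ?case by (simp only: upt_add_Suc_Cons list.map)
qed (simp add: from_Nil)

lemma Hcirc_from_map_Th_append:
  "c < Th (j + s) \<Longrightarrow> Hcirc_from 0 r \<Longrightarrow> Hcirc_from j (map Th [j..<j + s] @ c # r)"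
proof (induction s arbitrary: j)
  case (Suc s)
  then show ?case using Suc.IH[of "Suc j"] upt_add_Suc_Cons[of j s] by (simp add: from_Th del: upt_Suc)
qed (simp add: from_less)

lemma Hcirc_imp_Hcirc_from: "e \<in> Hcirc L \<Longrightarrow> Hcirc_from 0 e"
proof (induction rule: Hcirc.induct)
  case (full n) then show ?case using Hcirc_from_map_Th[of 0 n] by (simp add: Theta_pref_eq)
next
  case (step c s rest) then show ?case
    using Hcirc_from_map_Th_append[of c 0 s rest] by (simp add: Theta_pref_eq Theta_Suc)
qed

lemma Hcirc_of_split:
  "e = map Th [0..<n] \<or> (\<exists>s c r. e = map Th [0..<s] @ c # r \<and> c < Th s \<and> r \<in> Hcirc L)
     \<Longrightarrow> e \<in> Hcirc L"
  using Hcirc.full[of L n] Hcirc.step[of _ L] by (auto simp: Theta_pref_eq Theta_Suc)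

lemma Hcirc_from_split:
  "Hcirc_from j e \<Longrightarrow> e = map Th [j..<j + length e] \<or>
     (\<exists>s c r. e = map Th [j..<j + s] @ c # r \<and> c < Th (j + s) \<and> r \<in> Hcirc L)"
proof (induction rule: Hcirc_from.induct)
  case (from_less c j r)
  then have "r \<in> Hcirc L" by (intro Hcirc_of_split) auto
  then show ?case using from_less.hyps(1) by (intro disjI2 exI[of _ 0] exI[of _ c] exI[of _ r]) simp
next
  case (from_Th j r)
  from from_Th.IH show ?case
  proof
    assume "r = map Th [Suc j..<Suc j + length r]"
    then show ?thesis using upt_add_Suc_Cons[of j "length r"] by (simp del: upt_Suc)
  next
    assume "\<exists>s c r'. r = map Th [Suc j..<Suc j + s] @ c # r' \<and> c < Th (Suc j + s) \<and> r' \<in> Hcirc L"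
    then obtain s c r' where "r = map Th [Suc j..<Suc j + s] @ c # r'" "c < Th (Suc j + s)" "r' \<in> Hcirc L"
      by auto
    then have "Th j # r = map Th [j..<j + Suc s] @ c # r'" "c < Th (j + Suc s)" "r' \<in> Hcirc L"
      using upt_add_Suc_Cons[of j s] by (simp_all del: upt_Suc)
    then show ?thesis by blast
  qed
qed simp

lemma Hcirc_iff_Hcirc_from: "e \<in> Hcirc L \<longleftrightarrow> Hcirc_from 0 e"
  using Hcirc_imp_Hcirc_from Hcirc_from_split[of 0 e] Hcirc_of_split[of e "length e"] by auto

lemma Hcirc_from_take: "Hcirc_from j e \<Longrightarrow> Hcirc_from j (take k e)"
proof (induction arbitrary: k rule: Hcirc_from.induct)
  case (from_less c j r) then show ?case by (cases k) (auto intro: Hcirc_from.intros)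
next
  case (from_Th j r) then show ?case by (cases k) (auto intro: Hcirc_from.intros)
qed (simp add: from_Nil)

lemma Hcirc_from_snoc_0: "Hcirc_from j e \<Longrightarrow> Hcirc_from j (e @ [0])"
proof (induction rule: Hcirc_from.induct)
  case (from_Nil j)
  then show ?case
    using from_Th[OF Hcirc_from.from_Nil[of "Suc j"]] from_less[OF _ Hcirc_from.from_Nil, of 0 j]
    by (cases "Th j = 0") auto
qed (auto intro: Hcirc_from.intros)

lemma Hcirc_from_append_zeros: "Hcirc_from j e \<Longrightarrow> Hcirc_from j (e @ replicate k 0)"
proof (induction k)
  case (Suc k)
  have "e @ replicate (Suc k) 0 = (e @ replicate k 0) @ [0]"
    by (simp add: replicate_append_same[symmetric])
  then show ?case using Hcirc_from_snoc_0[OF Suc.IH[OF Suc.prems]] by simp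
qed simp

lemma Hcirc_from_digit_le_Max: "Hcirc_from j e \<Longrightarrow> x \<in> set e \<Longrightarrow> x \<le> Max (set L)"
proof (induction rule: Hcirc_from.induct)
  case (from_less c j r)
  then show ?case using Max_ge[OF _ Th_mem[of j]] by fastforce
next
  case (from_Th j r)
  then show ?case using Max_ge[OF _ Th_mem[of j]] by fastforce
qed simp

fun Hval :: "nat list \<Rightarrow> nat" where
  "Hval [] = 0"
| "Hval (x # xs) = x * H (Suc (length xs)) + Hval xs"

lemma Hval_eq_sum: "Hval e = (\<Sum>k=1..length e. e ! (k - 1) * H (length e - k + 1))"
proof (induction e)
  case (Cons x xs)
  have "(\<Sum>k=1..length (x # xs). (x # xs) ! (k - 1) * H (length (x # xs) - k + 1))
      = (\<Sum>k<Suc (length xs). (x # xs) ! k * H (length xs - k + 1))"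
    unfolding One_nat_def sum.atLeast1_atMost_eq by simp
  also have "\<dots> = x * H (Suc (length xs)) + (\<Sum>k<length xs. xs ! k * H (length xs - Suc k + 1))"
    by (subst sum.lessThan_Suc_shift) simp
  also have "(\<Sum>k<length xs. xs ! k * H (length xs - Suc k + 1)) =
      (\<Sum>k=1..length xs. xs ! (k - 1) * H (length xs - k + 1))"
    unfolding One_nat_def sum.atLeast1_atMost_eq by simp
  finally show ?case using Cons by simp
qed simp

lemma Hval_append_zeros: "Hval (u @ replicate k 0) = (\<Sum>i<length u. u ! i * H (length u + k - i))"
proof (induction u)
  case Nil then show ?case by (induction k) auto
next
  case (Cons a u)
  have "(\<Sum>i<length (a # u). (a # u) ! i * H (length (a # u) + k - i))
     = a * H (Suc (length u + k)) + (\<Sum>i<length u. u ! i * H (length u + k - i))"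
    by (simp only: length_Cons sum.lessThan_Suc_shift) simp
  then show ?case using Cons by simp
qed

lemma Hval_map_Th: "Hval (map Th [j..<j + n]) = (\<Sum>i<n. Th (j + i) * H (n - i))"
proof (induction n arbitrary: j)
  case (Suc n)
  have "Hval (map Th [j..<j + Suc n]) = Th j * H (Suc n) + (\<Sum>i<n. Th (Suc j + i) * H (n - i))"
    using Suc[of "Suc j"] upt_add_Suc_Cons[of j n] by (simp del: upt_Suc)
  also have "\<dots> = (\<Sum>i<Suc n. Th (j + i) * H (Suc n - i))"
    by (subst sum.lessThan_Suc_shift) simp
  finally show ?case .
qed simp

definition Hbound :: "nat \<Rightarrow> nat \<Rightarrow> nat" where "Hbound j n = Hval (map Th [j..<j + n]) + 1"

lemma Hbound_Suc: "Hbound j (Suc n) = Th j * H (Suc n) + Hbound (Suc j) n"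
  using upt_add_Suc_Cons[of j n] by (simp add: Hbound_def del: upt_Suc)

lemma Hbound_0: "Hbound 0 n = H (Suc n)"
  unfolding Hbound_def using Hval_map_Th[of 0 n] H_Suc_eq[of n] by simp

lemma Hcirc_from_Hval_less: "Hcirc_from j e \<Longrightarrow> Hval e < Hbound j (length e)"
proof (induction rule: Hcirc_from.induct)
  case (from_Nil j) then show ?case by (simp add: Hbound_def)
next
  case (from_less c j r)
  have "Hval (c # r) < (c + 1) * H (Suc (length r))" using from_less.IH Hbound_0 by simp
  also have "\<dots> \<le> Th j * H (Suc (length r))" using from_less.hyps(1) by (intro mult_right_mono) auto
  also have "\<dots> < Hbound j (length (c # r))" using Hbound_Suc[of j "length r"] by (simp add: Hbound_def)
  finally show ?case .
next
  case (from_Th j r)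
  then show ?case using Hbound_Suc[of j "length r"] by simp
qed

lemma Hcirc_from_Hval_strict_mono:
  "Hcirc_from j e \<Longrightarrow> Hcirc_from j e' \<Longrightarrow> length e = length e' \<Longrightarrow> e < e' \<Longrightarrow> Hval e < Hval e'"
proof (induction arbitrary: e' rule: Hcirc_from.induct)
  case (from_less c j r)
  have r: "Hval r < H (Suc (length r))" using Hcirc_from_Hval_less[OF from_less.hyps(2)] Hbound_0 by simp
  from from_less.prems(1) show ?case
  proof cases
    case (from_less c' r')
    then consider "c < c'" | "c = c'" "r < r'" using from_less.prems(3) by auto
    then show ?thesis
    proof cases
      case 1 then show ?thesis using add_mult_less_add_mult[OF r] from_less.prems(2) \<open>e' = c' # r'\<close> by simp
    next
      case 2 then show ?thesis using from_less.IH[of r'] from_less.prems(2) \<open>e' = c' # r'\<close> \<open>Hcirc_from 0 r'\<close>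
        by simp
    qed
  next
    case (from_Th r')
    then show ?thesis
      using add_mult_less_add_mult[OF r from_less.hyps(1)] from_less.prems(2) by simp
  qed (use from_less.prems in simp)
next
  case (from_Th j r)
  from from_Th.prems(1) show ?case
  proof cases
    case (from_less c' r')
    then show ?thesis using from_Th.prems(3) by auto
  next
    case (from_Th r')
    then show ?thesis using from_Th.IH[of r'] from_Th.prems by simp
  qed (use from_Th.prems in simp)
qed simp

lemma Hcirc_from_Hval_surj: "m < Hbound j n \<Longrightarrow> \<exists>e. Hcirc_from j e \<and> length e = n \<and> Hval e = m"
proof (induction n arbitrary: j m)
  case 0 then show ?case by (auto simp: Hbound_def intro: from_Nil)
next
  case (Suc n)
  have H_pos: "H (Suc n) > 0" using H_Suc_ge_1[of n] by simp
  show ?case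
  proof (cases "m < Th j * H (Suc n)")
    case True
    define c where "c = m div H (Suc n)"
    have c: "c < Th j" using True H_pos unfolding c_def by (simp add: div_less_iff_less_mult)
    have "m mod H (Suc n) < Hbound 0 n" using H_pos Hbound_0 by simp
    then obtain r where r: "Hcirc_from 0 r" "length r = n" "Hval r = m mod H (Suc n)"
      using Suc.IH by blast
    have "Hval (c # r) = m" using r div_mult_mod_eq[of m "H (Suc n)"] unfolding c_def by simp
    then show ?thesis using r c from_less by (intro exI[of _ "c # r"]) simp
  next
    case False
    then have "m - Th j * H (Suc n) < Hbound (Suc j) n" using Suc.prems Hbound_Suc by simp
    then obtain r where r: "Hcirc_from (Suc j) r" "length r = n" "Hval r = m - Th j * H (Suc n)"
      using Suc.IH by blast
    then show ?thesis using False from_Th by (intro exI[of _ "Th j # r"]) simp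
  qed
qed

lemma Hcirc_Hval_less: "e \<in> Hcirc L \<Longrightarrow> Hval e < H (Suc (length e))"
  using Hcirc_from_Hval_less[of 0 e] Hbound_0 by (simp add: Hcirc_iff_Hcirc_from)

lemma Hcirc_Hval_strict_mono:
  "e \<in> Hcirc L \<Longrightarrow> e' \<in> Hcirc L \<Longrightarrow> length e = length e' \<Longrightarrow> e < e' \<Longrightarrow> Hval e < Hval e'"
  using Hcirc_from_Hval_strict_mono[of 0 e e'] by (simp add: Hcirc_iff_Hcirc_from)

lemma Hcirc_Hval_mono:
  "e \<in> Hcirc L \<Longrightarrow> e' \<in> Hcirc L \<Longrightarrow> length e = length e' \<Longrightarrow> e \<le> e' \<Longrightarrow> Hval e \<le> Hval e'"
  using Hcirc_Hval_strict_mono[of e e'] by (auto simp: le_less)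

lemma Hcirc_Hval_surj: "m < H (Suc n) \<Longrightarrow> \<exists>e \<in> Hcirc L. length e = n \<and> Hval e = m"
  using Hcirc_from_Hval_surj[of m 0 n] Hbound_0 by (auto simp: Hcirc_iff_Hcirc_from)

lemma Hset_Cons: "e \<in> Hset L \<Longrightarrow> \<exists>c r. e = c # r \<and> c > 0"
  unfolding Hset_def by (cases e) auto

lemma Hset_Hval_bounds:
  assumes e: "e \<in> Hset L"
  shows "H (length e) \<le> Hval e \<and> Hval e < H (Suc (length e))"
proof -
  obtain c r where e_eq: "e = c # r" "c > 0" using Hset_Cons[OF e] by blast
  then have "H (length e) \<le> c * H (Suc (length r))" by simp
  moreover have "Hval e = c * H (Suc (length r)) + Hval r" using e_eq by simp
  ultimately have "H (length e) \<le> Hval e" by linarith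
  then show ?thesis using Hcirc_Hval_less e unfolding Hset_def by blast
qed

lemma Hset_length_ge_1: "e \<in> Hset L \<Longrightarrow> length e \<ge> 1"
  unfolding Hset_def by (cases e) auto

lemma Hset_Hval_surj:
  assumes m: "1 \<le> m"
  shows "\<exists>e \<in> Hset L. Hval e = m"
proof -
  have ex: "\<exists>n. m < H (Suc n)" using H_Suc_ge[of m] by (intro exI[of _ m]) simp
  define M where "M = (LEAST n. m < H (Suc n))"
  have M_upper: "m < H (Suc M)" unfolding M_def by (rule LeastI_ex[OF ex])
  obtain M' where M': "M = Suc M'" using M_upper m H_1 by (cases M) auto
  have M_lower: "H M \<le> m"
  proof (rule ccontr)
    assume "\<not> H M \<le> m"
    then have "M \<le> M'" using M' unfolding M_def by (intro Least_le) simp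
    then show False using M' by simp
  qed
  obtain e where e: "e \<in> Hcirc L" "length e = M" "Hval e = m" using Hcirc_Hval_surj[OF M_upper] by blast
  obtain c r where cr: "e = c # r" using e(2) M' by (cases e) auto
  have "c > 0"
  proof (rule ccontr)
    assume "\<not> c > 0"
    then have "Hcirc_from 0 (0 # r)" using e(1) cr by (simp add: Hcirc_iff_Hcirc_from)
    then have "Hcirc_from 0 r" using Th_0_pos by cases auto
    then have "Hval r < H (Suc (length r))" using Hcirc_Hval_less Hcirc_iff_Hcirc_from by blast
    then show False using M_lower e cr \<open>\<not> c > 0\<close> by simp
  qed
  then show ?thesis using e cr unfolding Hset_def by auto
qed

lemma Hset_Hval_inj:
  assumes e: "e \<in> Hset L" and e': "e' \<in> Hset L" and v: "Hval e = Hval e'"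
  shows "e = e'"
proof -
  have "length e = length e'"
  proof (rule ccontr)
    assume "length e \<noteq> length e'"
    then consider "length e < length e'" | "length e' < length e" by linarith
    then show False
    proof cases
      case 1
      then have "H (Suc (length e)) \<le> H (length e')" by (intro H_mono) auto
      then show False using Hset_Hval_bounds[OF e] Hset_Hval_bounds[OF e'] v by simp
    next
      case 2
      then have "H (Suc (length e')) \<le> H (length e)" by (intro H_mono) auto
      then show False using Hset_Hval_bounds[OF e] Hset_Hval_bounds[OF e'] v by simp
    qed
  qed
  then show ?thesis
    using Hcirc_Hval_strict_mono[of e e'] Hcirc_Hval_strict_mono[of e' e] e e' v
    unfolding Hset_def by (metis (no_types, lifting) mem_Collect_eq linorder_neqE less_irrefl)
qed

lemma Hexp_Hval: "e \<in> Hset L \<Longrightarrow> Hexp L (Hval e) = e"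
  unfolding Hexp_def Hval_eq_sum[symmetric] by (rule the_equality) (auto intro: Hset_Hval_inj)

lemma Hexp_in_Hset: "1 \<le> m \<Longrightarrow> Hexp L m \<in> Hset L"
  and Hval_Hexp: "1 \<le> m \<Longrightarrow> Hval (Hexp L m) = m"
  using Hset_Hval_surj[of m] Hexp_Hval by auto

lemma Hset_take_append_zeros:
  assumes e: "e \<in> Hset L" and k: "1 \<le> k"
  shows "take k e @ replicate t 0 \<in> Hset L"
proof -
  have "Hcirc_from 0 (take k e @ replicate t 0)"
    using e unfolding Hset_def Hcirc_iff_Hcirc_from by (auto intro: Hcirc_from_append_zeros Hcirc_from_take)
  moreover obtain a r where "e = a # r" "a > 0" using Hset_Cons[OF e] by blast
  moreover obtain k' where "k = Suc k'" using k by (cases k) auto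
  ultimately show ?thesis unfolding Hset_def Hcirc_iff_Hcirc_from by simp
qed

end

section \<open>Leading blocks\<close>

definition pad_to :: "nat \<Rightarrow> nat list \<Rightarrow> nat list" where
  "pad_to M b = b @ replicate (M - length b) 0"

context admissible_tuple
begin

definition lead_block :: "nat \<Rightarrow> nat list \<Rightarrow> nat list" where
  "lead_block s e = take s e @ replicate (N - s) 0"

lemma LB_eq_lead_block: "s \<le> length (Hexp L m) \<Longrightarrow> LB L s m = Some (lead_block s (Hexp L m))"
  unfolding LB_def lead_block_def Let_def by auto

lemma Hs_iff: "b \<in> Hs L s \<longleftrightarrow> (\<exists>e\<in>Hset L. s \<le> length e \<and> b = lead_block s e)"
proof
  assume "b \<in> Hs L s"
  then obtain m where m: "m \<ge> 1" "LB L s m = Some b" unfolding Hs_def by auto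
  then have "s \<le> length (Hexp L m)" unfolding LB_def Let_def by (auto split: if_splits)
  then show "\<exists>e\<in>Hset L. s \<le> length e \<and> b = lead_block s e"
    using m Hexp_in_Hset[of m] LB_eq_lead_block[of s m] by auto
next
  assume "\<exists>e\<in>Hset L. s \<le> length e \<and> b = lead_block s e"
  then obtain e where e: "e \<in> Hset L" "s \<le> length e" "b = lead_block s e" by auto
  have "Hval e \<ge> 1"
    using Hset_Hval_bounds[OF e(1)] Hset_length_ge_1[OF e(1)] H_mono[of 1 "length e"] H_1 by simp
  moreover have "LB L s (Hval e) = Some b" using e Hexp_Hval[OF e(1)] LB_eq_lead_block[of s "Hval e"] by simp
  ultimately show "b \<in> Hs L s" unfolding Hs_def by auto
qed

lemma Hs_length: "b \<in> Hs L s \<Longrightarrow> length b = max s N"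
  and Hs_eq_take_append: "b \<in> Hs L s \<Longrightarrow> b = take s b @ replicate (N - s) 0"
  unfolding Hs_iff lead_block_def by auto

lemma Hs_pad_to:
  assumes b: "b \<in> Hs L s" and s: "1 \<le> s" and M: "max s N \<le> M"
  shows "pad_to M b \<in> Hset L" "length (pad_to M b) = M" "LB L s (Hval (pad_to M b)) = Some b"
proof -
  obtain e where e: "e \<in> Hset L" "s \<le> length e" "b = lead_block s e" using b unfolding Hs_iff by auto
  have "N - s + (M - (s + (N - s))) = M - s" using M by linarith
  then have w: "pad_to M b = take s e @ replicate (M - s) 0"
    using e(2) unfolding e(3) pad_to_def lead_block_def by (simp add: replicate_add[symmetric])
  show wH: "pad_to M b \<in> Hset L" unfolding w using Hset_take_append_zeros[OF e(1) s] .
  show lw: "length (pad_to M b) = M" unfolding w using e(2) M by simp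
  have "LB L s (Hval (pad_to M b)) = Some (lead_block s (pad_to M b))"
    using LB_eq_lead_block Hexp_Hval[OF wH] lw M by simp
  also have "lead_block s (pad_to M b) = b"
    unfolding w using e(2) M unfolding e(3) lead_block_def by simp
  finally show "LB L s (Hval (pad_to M b)) = Some b" .
qed

lemma LB_eqI:
  assumes s: "1 \<le> s" and m: "1 \<le> m" and M: "length (Hexp L m) = M" "max s N \<le> M"
    and b: "b \<in> Hs L s"
    and lo: "Hval (pad_to M b) \<le> m"
    and hi: "\<And>b'. b' \<in> Hs L s \<Longrightarrow> b < b' \<Longrightarrow> m < Hval (pad_to M b')"
  shows "LB L s m = Some b"
proof (rule ccontr)
  define e where "e = Hexp L m"
  define p where "p = lead_block s e"
  have e: "e \<in> Hset L" "Hval e = m" "length e = M"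
    using Hexp_in_Hset[OF m] Hval_Hexp[OF m] M unfolding e_def by auto
  have p: "p \<in> Hs L s" unfolding p_def Hs_iff using e M by auto
  have lengths: "length (take s b) = s" "length (take s e) = s" using Hs_length[OF b] e M by auto
  have zeros: "N - s + (M - max s N) = M - s" using M by linarith
  have b_pad: "pad_to M b = take s b @ replicate (M - s) 0"
    using Hs_eq_take_append[OF b] unfolding pad_to_def Hs_length[OF b] zeros[symmetric]
    by (metis append.assoc replicate_add)
  have p_pad: "pad_to M p = take s e @ replicate (M - s) 0"
    using Hs_length[OF p] unfolding p_def lead_block_def pad_to_def zeros[symmetric]
    by (simp add: replicate_add[symmetric])
  assume "LB L s m \<noteq> Some b"
  then have "p \<noteq> b" using LB_eq_lead_block[of s m] M unfolding p_def e_def by simp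
  then consider "p < b" | "b < p" by (meson linorder_neqE)
  then show False
  proof cases
    case 1
    then have "take s e < take s b"
      using Hs_eq_take_append[OF b] lengths unfolding p_def lead_block_def
      by (metis append_less_append_same_lengthD)
    then have "take s e @ drop s e < take s b @ replicate (M - s) 0"
      using lengths by (intro append_less_append_same_length) auto
    then have "Hval e < Hval (pad_to M b)"
      using Hcirc_Hval_strict_mono[of e "pad_to M b"] e Hs_pad_to[OF b s M(2)] b_pad
      unfolding Hset_def by auto
    then show False using lo e by simp
  next
    case 2
    have "pad_to M p \<le> take s e @ drop s e"
      unfolding p_pad using e M by (intro append_le_append_left replicate_zero_le) auto
    then have "Hval (pad_to M p) \<le> Hval e"
      using Hcirc_Hval_mono[of "pad_to M p" e] e Hs_pad_to[OF p s M(2)] unfolding Hset_def by auto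
    then show False using hi[OF p 2] e by simp
  qed
qed

lemma Hs_finite: "finite (Hs L s)"
proof (rule finite_subset)
  show "Hs L s \<subseteq> {xs. set xs \<subseteq> {0..Max (set L)} \<and> length xs = max s N}"
  proof
    fix b assume b: "b \<in> Hs L s"
    then obtain e where e: "e \<in> Hset L" "s \<le> length e" "b = lead_block s e" unfolding Hs_iff by auto
    have "set (take s e) \<subseteq> {0..Max (set L)}"
      using Hcirc_from_digit_le_Max[of 0 e] e(1) set_take_subset[of s e]
      unfolding Hset_def Hcirc_iff_Hcirc_from by auto
    then show "b \<in> {xs. set xs \<subseteq> {0..Max (set L)} \<and> length xs = max s N}"
      using e Hs_length[OF b] unfolding lead_block_def by auto
  qed
qed (rule finite_lists_length_eq, simp)

definition first_block :: "nat \<Rightarrow> nat list" where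
  "first_block s = 1 # replicate (max s N - 1) 0"

lemma first_block_in_Hs: "1 \<le> s \<Longrightarrow> first_block s \<in> Hs L s"
proof -
  assume s: "1 \<le> s"
  have "Hcirc_from 0 [1]"
    using from_Th[OF from_Nil[of "Suc 0"]] from_less[OF _ from_Nil, of 1 0] Th_0_pos
    by (cases "Th 0 = 1") auto
  then have "Hcirc_from 0 ([1] @ replicate (max s N - 1) 0)" by (rule Hcirc_from_append_zeros)
  then have "first_block s \<in> Hset L"
    unfolding first_block_def Hset_def Hcirc_iff_Hcirc_from by simp
  moreover have "lead_block s (first_block s) = first_block s"
    using s unfolding first_block_def lead_block_def
    by (cases s) (auto simp: replicate_add[symmetric] min_def)
  ultimately show ?thesis unfolding Hs_iff using s by (intro bexI[of _ "first_block s"]) (auto simp: first_block_def)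
qed

lemma first_block_le: "1 \<le> s \<Longrightarrow> b \<in> Hs L s \<Longrightarrow> first_block s \<le> b"
proof -
  assume s: "1 \<le> s" and b: "b \<in> Hs L s"
  then obtain e where e: "e \<in> Hset L" "s \<le> length e" "b = lead_block s e" unfolding Hs_iff by auto
  obtain c r where cr: "e = c # r" "c > 0" using Hset_Cons[OF e(1)] by blast
  obtain y where y: "b = c # y" using e cr s unfolding lead_block_def by (cases s) auto
  have "length y = max s N - 1" using Hs_length[OF b] y by simp
  then show ?thesis using replicate_zero_le[of y] cr y unfolding first_block_def by (cases "c = 1") auto
qed

lemma Min_Hs: "1 \<le> s \<Longrightarrow> Min (Hs L s) = first_block s"
  using first_block_in_Hs first_block_le Hs_finite by (intro Min_eqI) auto


section \<open>Growth of the fundamental sequence\<close>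

text \<open>The recurrence of H as H j = (\<Sum>i=1..N. weight i * H (j - i)); with t = 1 / x, the
  characteristic equation of psiL becomes W t = 1.\<close>

definition weight :: "nat \<Rightarrow> real" where
  "weight i = (if i < N then real (L ! (i - 1)) else 1 + real (L ! (N - 1)))"

definition W :: "real \<Rightarrow> real" where "W t = (\<Sum>i=1..N. weight i * t ^ i)"

lemma weight_nonneg: "weight i \<ge> 0"
  and weight_N_ge_1: "weight N \<ge> 1"
  and weight_1_pos: "weight 1 > 0"
  using N_ge_2 admissible unfolding weight_def by (auto simp: admissible_def)

lemma weight_sum_split: "(\<Sum>i=1..N. weight i * f i) = (\<Sum>i=1..N - 1. real (L ! (i - 1)) * f i) + weight N * f N"
proof -
  have "(\<Sum>i=1..N - 1. weight i * f i) = (\<Sum>i=1..N - 1. real (L ! (i - 1)) * f i)"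
    by (intro sum.cong) (auto simp: weight_def)
  then show ?thesis using sum_atLeastAtMost_split_last[of N "\<lambda>i. weight i * f i"] N_pos by simp
qed

lemma W_strict_mono: "0 \<le> s \<Longrightarrow> s < t \<Longrightarrow> W s < W t"
  unfolding W_def
proof (rule sum_strict_mono_ex1)
  assume st: "0 \<le> s" "s < t"
  show "\<forall>i\<in>{1..N}. weight i * s ^ i \<le> weight i * t ^ i"
    using st weight_nonneg by (auto intro!: mult_left_mono power_mono)
  show "\<exists>i\<in>{1..N}. weight i * s ^ i < weight i * t ^ i"
    using st weight_N_ge_1 N_ge_2 by (intro bexI[of _ N]) (auto intro!: mult_strict_left_mono power_strict_mono)
qed simp

lemma W_1_gt: "W 1 > 1"
proof -
  have "{1, N} \<subseteq> {1..N}" using N_ge_2 by auto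
  then have "(\<Sum>i\<in>{1, N}. weight i * 1 ^ i) \<le> W 1" unfolding W_def
    by (intro sum_mono2) (auto simp: weight_nonneg)
  then show ?thesis using N_ge_2 weight_1_pos weight_N_ge_1 by simp
qed

lemma W_eq_1_exists: "\<exists>t. 0 < t \<and> t < 1 \<and> W t = 1"
proof -
  have "continuous_on {0..1} W" unfolding W_def by (intro continuous_intros)
  moreover have "W 0 = 0" unfolding W_def by simp
  ultimately obtain t where "0 \<le> t" "t \<le> 1" "W t = 1" using IVT'[of W 0 1 1] W_1_gt by auto
  then show ?thesis using \<open>W 0 = 0\<close> W_1_gt by (intro exI[of _ t]) (auto simp: order.order_iff_strict)
qed

lemma char_poly_eq_W:
  assumes x: "x > 0"
  shows "x ^ N - (\<Sum>k=1..N - 1. real (L ! (k - 1)) * x ^ (N - k)) - (1 + real (L ! (N - 1)))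
           = x ^ N * (1 - W (1 / x))"
proof -
  have "x ^ N * W (1 / x) = (\<Sum>i=1..N. weight i * x ^ (N - i))"
    unfolding W_def sum_distrib_left
  proof (rule sum.cong[OF refl])
    fix i assume "i \<in> {1..N}"
    then have "x ^ N = x ^ i * x ^ (N - i)" by (simp add: power_add[symmetric])
    then show "x ^ N * (weight i * (1 / x) ^ i) = weight i * x ^ (N - i)"
      using x by (simp add: power_one_over field_simps)
  qed
  then show ?thesis unfolding weight_sum_split by (simp add: weight_def algebra_simps)
qed

lemma psiL_eq:
  assumes t: "0 < t" "W t = 1"
  shows "psiL L = 1 / t"
  unfolding psiL_def
proof (rule the_equality)
  fix x assume x: "x > 0 \<and> x ^ N - (\<Sum>k=1..N - 1. real (L ! (k - 1)) * x ^ (N - k)) - (1 + real (L ! (N - 1))) = 0"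
  then have "W (1 / x) = W t" using char_poly_eq_W[of x] t by simp
  then have "1 / x = t"
    using W_strict_mono x t by (metis linorder_neqE_linordered_idom less_irrefl less_eq_real_def zero_le_divide_1_iff)
  then show "x = 1 / t" by auto
qed (use char_poly_eq_W[of "1 / t"] t in simp)

abbreviation \<psi> :: real where "\<psi> \<equiv> psiL L"
abbreviation \<theta> :: real where "\<theta> \<equiv> thetaL L"

lemma theta_pos: "\<theta> > 0" and theta_less_1: "\<theta> < 1" and W_theta: "W \<theta> = 1"
  using W_eq_1_exists psiL_eq unfolding thetaL_def by auto

lemma psi_eq: "\<psi> = 1 / \<theta>"
  unfolding thetaL_def by (simp add: inverse_eq_divide)

lemma psi_gt_1: "\<psi> > 1"
  using psi_eq theta_pos theta_less_1 by simp

lemma psi_mult_theta: "\<psi> * \<theta> = 1"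
  using psi_eq theta_pos by simp

lemma H_rec_weighted:
  assumes j: "j \<ge> N + 1"
  shows "real (H j) = (\<Sum>i=1..N. weight i * real (H (j - i)))"
proof -
  obtain m where m: "j = Suc m" using j by (cases j) auto
  show ?thesis
  proof (cases "j = N + 1")
    case True
    have "H j = 1 + (\<Sum>k=1..m. L ! (k - 1) * H (Suc m - k))" using Hseq_Suc_initial[of m L] True m by simp
    also have "(\<Sum>k=1..m. L ! (k - 1) * H (Suc m - k)) =
        (\<Sum>k=1..N - 1. L ! (k - 1) * H (j - k)) + L ! (N - 1) * H (j - N)"
      using sum_atLeastAtMost_split_last[of m "\<lambda>k. L ! (k - 1) * H (Suc m - k)"] True m N_pos by simp
    finally show ?thesis using True H_1 unfolding weight_sum_split by (simp add: weight_def algebra_simps)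
  next
    case False
    then have "H j = (\<Sum>k=1..N - 1. L ! (k - 1) * H (j - k)) + (1 + L ! (N - 1)) * H (j - N)"
      using Hseq_Suc_recurrence[of L m] N_pos j m by simp
    then show ?thesis unfolding weight_sum_split by (simp add: weight_def algebra_simps)
  qed
qed

text \<open>Normalised by theta ^ j, H satisfies an averaging recurrence (the weights sum to
  W theta = 1), hence converges.\<close>

definition Hnorm :: "nat \<Rightarrow> real" where "Hnorm j = real (H j) * \<theta> ^ j"

lemma Hnorm_averaging: "averaging_recurrence Hnorm (\<lambda>i. weight i * \<theta> ^ i) N (N + 1)"
proof
  show "(\<Sum>i = 1..N. weight i * \<theta> ^ i) = 1" using W_theta unfolding W_def .
  fix j assume j: "N + 1 \<le> j"
  have "Hnorm j = (\<Sum>i=1..N. weight i * real (H (j - i))) * \<theta> ^ j"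
    unfolding Hnorm_def using H_rec_weighted[OF j] by simp
  also have "\<dots> = (\<Sum>i=1..N. weight i * \<theta> ^ i * Hnorm (j - i))" unfolding sum_distrib_right Hnorm_def
  proof (rule sum.cong[OF refl])
    fix i assume "i \<in> {1..N}"
    then have "\<theta> ^ j = \<theta> ^ i * \<theta> ^ (j - i)" using j by (simp add: power_add[symmetric])
    then show "weight i * real (H (j - i)) * \<theta> ^ j = weight i * \<theta> ^ i * (real (H (j - i)) * \<theta> ^ (j - i))"
      by simp
  qed
  finally show "Hnorm j = (\<Sum>i=1..N. weight i * \<theta> ^ i * Hnorm (j - i))" .
qed (use N_ge_2 weight_nonneg weight_1_pos weight_N_ge_1 theta_pos in auto)

lemma Hnorm_pos: "j \<ge> 1 \<Longrightarrow> Hnorm j > 0"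
  unfolding Hnorm_def using H_Suc_ge_1[of "j - 1"] theta_pos by simp

lemma Hnorm_convergent: "\<exists>c>0. Hnorm \<longlonglongrightarrow> c"
proof -
  interpret averaging_recurrence Hnorm "\<lambda>i. weight i * \<theta> ^ i" N "N + 1" by (rule Hnorm_averaging)
  define S where "S = Hnorm ` {1..<1 + N}"
  have S: "finite S" "S \<noteq> {}" unfolding S_def using N_pos by auto
  have "\<exists>c. Hnorm \<longlonglongrightarrow> c \<and> c \<ge> Min S"
    by (rule convergent_ge[of 1 "Min S" "Max S"]) (auto simp: S_def intro!: Min_le Max_ge)
  moreover have "Min S > 0" using S Hnorm_pos unfolding S_def by (subst Min_gr_iff) auto
  ultimately show ?thesis by (meson less_le_trans)
qed

definition Hconst :: real where "Hconst = (SOME c. c > 0 \<and> Hnorm \<longlonglongrightarrow> c)"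

lemma Hconst_pos: "Hconst > 0" and Hnorm_tendsto: "Hnorm \<longlonglongrightarrow> Hconst"
  using someI_ex[OF Hnorm_convergent] unfolding Hconst_def by auto

lemma H_ratio_tendsto: "(\<lambda>M. real (H (M - i)) / real (H M)) \<longlonglongrightarrow> \<theta> ^ i"
proof -
  have "(\<lambda>M. Hnorm (M - i) / Hnorm M * \<theta> ^ i) \<longlonglongrightarrow> Hconst / Hconst * \<theta> ^ i"
    using Hnorm_tendsto Hconst_pos by (intro tendsto_intros seq_offset_neg) auto
  moreover have "eventually (\<lambda>M. Hnorm (M - i) / Hnorm M * \<theta> ^ i = real (H (M - i)) / real (H M)) sequentially"
    unfolding eventually_sequentially
  proof (intro exI[of _ i] allI impI)
    fix M assume "i \<le> M"
    then have "\<theta> ^ M = \<theta> ^ (M - i) * \<theta> ^ i" by (simp add: power_add[symmetric])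
    then show "Hnorm (M - i) / Hnorm M * \<theta> ^ i = real (H (M - i)) / real (H M)"
      unfolding Hnorm_def using theta_pos by (simp add: field_simps)
  qed
  ultimately show ?thesis using Hconst_pos by (simp add: Lim_transform_eventually)
qed

lemma H_Suc_ratio_tendsto: "(\<lambda>M. real (H (Suc M)) / real (H M)) \<longlonglongrightarrow> \<psi>"
proof -
  have "(\<lambda>M. Hnorm (Suc M) / Hnorm M / \<theta>) \<longlonglongrightarrow> Hconst / Hconst / \<theta>"
    using Hnorm_tendsto Hconst_pos theta_pos by (intro tendsto_intros) (auto simp: LIMSEQ_Suc)
  moreover have "eventually (\<lambda>M. Hnorm (Suc M) / Hnorm M / \<theta> = real (H (Suc M)) / real (H M)) sequentially"
    unfolding Hnorm_def using theta_pos by (simp add: field_simps)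
  ultimately show ?thesis using Hconst_pos psi_eq by (simp add: Lim_transform_eventually)
qed

lemma Hval_pad_to_ratio_tendsto: "(\<lambda>M. real (Hval (pad_to M b)) / real (H M)) \<longlonglongrightarrow> dotH L b"
proof -
  have "(\<lambda>M. \<Sum>i<length b. real (b ! i) * (real (H (M - i)) / real (H M))) \<longlonglongrightarrow> dotH L b"
    unfolding dotH_def by (intro tendsto_intros H_ratio_tendsto)
  moreover have "eventually (\<lambda>M. (\<Sum>i<length b. real (b ! i) * (real (H (M - i)) / real (H M))) =
      real (Hval (pad_to M b)) / real (H M)) sequentially"
    unfolding eventually_sequentially
  proof (intro exI[of _ "length b"] allI impI)
    fix M assume "length b \<le> M"
    then have "Hval (pad_to M b) = (\<Sum>i<length b. b ! i * H (M - i))"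
      using Hval_append_zeros[of b "M - length b"] unfolding pad_to_def by simp
    then show "(\<Sum>i<length b. real (b ! i) * (real (H (M - i)) / real (H M))) =
        real (Hval (pad_to M b)) / real (H M)"
      by (simp add: sum_divide_distrib)
  qed
  ultimately show ?thesis by (rule Lim_transform_eventually)
qed


section \<open>Weights of blocks\<close>

lemma dotH_append_zeros: "dotH L (xs @ replicate p 0) = dotH L xs"
  unfolding dotH_def by (simp add: sum_lessThan_add_split nth_append)

lemma dotH_snoc: "dotH L (xs @ [c]) = dotH L xs + real c * \<theta> ^ length xs"
  unfolding dotH_def by (simp add: nth_append)

lemma dotH_map_Th: "dotH L (map Th [0..<n]) = (\<Sum>i<n. real (Th i) * \<theta> ^ i)"
  unfolding dotH_def by simp

lemma sum_Th_period: "(\<Sum>i<N. real (Th i) * \<theta> ^ i) + \<theta> ^ (N - 1) = \<psi>"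
proof -
  have "1 = (\<Sum>i=1..N - 1. real (L ! (i - 1)) * \<theta> ^ i) + weight N * \<theta> ^ N"
    using W_theta unfolding W_def weight_sum_split by simp
  also have "\<dots> = (\<Sum>i=1..N. real (L ! (i - 1)) * \<theta> ^ i) + \<theta> ^ N"
    using sum_atLeastAtMost_split_last[of N "\<lambda>i. real (L ! (i - 1)) * \<theta> ^ i"] N_pos
    by (simp add: weight_def algebra_simps)
  also have "(\<Sum>i=1..N. real (L ! (i - 1)) * \<theta> ^ i) = \<theta> * (\<Sum>i<N. real (Th i) * \<theta> ^ i)"
    unfolding One_nat_def sum.atLeast1_atMost_eq sum_distrib_left
    by (intro sum.cong) (auto simp: Th_less)
  also have "\<theta> ^ N = \<theta> * \<theta> ^ (N - 1)" using N_pos by (simp add: power_eq_if)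
  finally have "1 = \<theta> * ((\<Sum>i<N. real (Th i) * \<theta> ^ i) + \<theta> ^ (N - 1))" by (simp add: algebra_simps)
  then have "\<psi> * 1 = (\<psi> * \<theta>) * ((\<Sum>i<N. real (Th i) * \<theta> ^ i) + \<theta> ^ (N - 1))" by simp
  then show ?thesis using psi_mult_theta by simp
qed

lemma sum_Th_periods:
  assumes "j \<ge> 1"
  shows "(\<Sum>i<j * N. real (Th i) * \<theta> ^ i) + \<theta> ^ (j * N - 1) = \<psi>"
  using assms
proof (induction j rule: dec_induct)
  case base then show ?case using sum_Th_period by simp
next
  case (step j)
  have "(\<Sum>i<Suc j * N. real (Th i) * \<theta> ^ i) =
      (\<Sum>i<j * N. real (Th i) * \<theta> ^ i) + (\<Sum>i<N. real (Th (j * N + i)) * \<theta> ^ (j * N + i))"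
    using sum_lessThan_add_split[of _ "j * N" N] by (simp add: add.commute)
  also have "(\<Sum>i<N. real (Th (j * N + i)) * \<theta> ^ (j * N + i)) = \<theta> ^ (j * N) * (\<Sum>i<N. real (Th i) * \<theta> ^ i)"
    by (simp add: sum_distrib_left Th_add_period power_add mult_ac)
  also have "(\<Sum>i<N. real (Th i) * \<theta> ^ i) = \<psi> - \<theta> ^ (N - 1)" using sum_Th_period by simp
  finally have "(\<Sum>i<Suc j * N. real (Th i) * \<theta> ^ i) =
      \<psi> - \<theta> ^ (j * N - 1) + \<theta> ^ (j * N) * (\<psi> - \<theta> ^ (N - 1))"
    using step.IH by simp
  moreover obtain m where m: "j * N = Suc m" using step.hyps N_ge_2 by (cases "j * N") auto
  then have "\<theta> ^ (j * N) * \<psi> = \<theta> ^ (j * N - 1)" using psi_mult_theta by (simp add: mult_ac)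
  moreover have "\<theta> ^ (j * N) * \<theta> ^ (N - 1) = \<theta> ^ (Suc j * N - 1)"
  proof -
    have "Suc j * N - 1 = j * N + (N - 1)" using m N_ge_2 by simp
    then show ?thesis by (simp add: power_add)
  qed
  ultimately show ?case by (simp add: algebra_simps)
qed

lemma excl_block_shape:
  "\<exists>j p. j \<ge> 1 \<and> excl_block L s = butlast (map Th [0..<j * N]) @ [1 + Th (j * N - 1)] @ replicate p 0"
proof (cases "N \<le> s")
  case True
  define j where "j = s div N"
  have "0 < j" unfolding j_def using True N_pos by (simp add: div_greater_zero_iff)
  then have j: "s - s mod N = j * N" "j \<ge> 1" unfolding j_def by (auto simp: minus_mod_eq_mult_div)
  obtain j' where "j = Suc j'" using j by (cases j) auto
  then have "j * N - 1 = j' * N + (N - 1)" using N_ge_2 by simp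
  then have "Th (j * N - 1) = L ! (N - 1)" using Th_add_period[of j' "N - 1"] Th_less[of "N - 1"] N_ge_2
    by simp
  then show ?thesis using True j unfolding excl_block_def Let_def Theta_pref_eq
    by (intro exI[of _ j] exI[of _ "s mod N"]) simp
next
  case False
  have "Th (1 * N - 1) = L ! (N - 1)" using Th_less N_pos by simp
  then show ?thesis using False unfolding excl_block_def Let_def
    by (intro exI[of _ 1] exI[of _ 0]) (simp add: L_eq_map_Th[symmetric])
qed

lemma dotH_excl_block: "dotH L (excl_block L s) = \<psi>"
proof -
  obtain j p where j: "j \<ge> 1"
    and excl: "excl_block L s = butlast (map Th [0..<j * N]) @ [1 + Th (j * N - 1)] @ replicate p 0"
    using excl_block_shape by blast
  obtain m where m: "j * N = Suc m" using j N_ge_2 by (cases "j * N") auto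
  have "butlast (map Th [0..<j * N]) = map Th [0..<j * N - 1]" unfolding m by simp
  have "dotH L (excl_block L s) = dotH L (map Th [0..<j * N - 1] @ [1 + Th (j * N - 1)])"
    using dotH_append_zeros[of "map Th [0..<j * N - 1] @ [1 + Th (j * N - 1)]" p] excl
      \<open>butlast _ = _\<close> by simp
  also have "\<dots> = (\<Sum>i<j * N - 1. real (Th i) * \<theta> ^ i) + (1 + real (Th (j * N - 1))) * \<theta> ^ (j * N - 1)"
    by (simp add: dotH_snoc dotH_map_Th)
  also have "\<dots> = (\<Sum>i<j * N. real (Th i) * \<theta> ^ i) + \<theta> ^ (j * N - 1)"
    unfolding m by (simp add: algebra_simps)
  also have "\<dots> = \<psi>" using sum_Th_periods j by simp
  finally show ?thesis .
qed

lemma dotH_Hs_ge_1: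
  assumes s: "1 \<le> s" and b: "b \<in> Hs L s"
  shows "dotH L b \<ge> 1"
proof -
  obtain e where e: "e \<in> Hset L" "s \<le> length e" "b = lead_block s e" using b unfolding Hs_iff by auto
  obtain c r where cr: "e = c # r" "c > 0" using Hset_Cons[OF e(1)] by blast
  obtain y where y: "b = c # y" using e cr s unfolding lead_block_def by (cases s) auto
  have "dotH L b = real c + (\<Sum>k<length y. real (y ! k) * \<theta> ^ Suc k)"
    unfolding dotH_def y by (simp only: length_Cons sum.lessThan_Suc_shift) simp
  moreover have "(\<Sum>k<length y. real (y ! k) * \<theta> ^ Suc k) \<ge> 0" using theta_pos by (intro sum_nonneg) simp
  ultimately show ?thesis using cr by simp
qed

lemma dotH_Hs_le_psi:
  assumes s: "1 \<le> s" and b: "b \<in> Hs L s"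
  shows "dotH L b \<le> \<psi>"
proof -
  have "eventually (\<lambda>M. real (Hval (pad_to M b)) / real (H M) \<le> real (H (Suc M)) / real (H M)) sequentially"
    unfolding eventually_sequentially
  proof (intro exI[of _ "max s N"] allI impI)
    fix M assume M: "max s N \<le> M"
    then have "Hval (pad_to M b) < H (Suc M)" using Hs_pad_to[OF b s M] Hset_Hval_bounds by fastforce
    then show "real (Hval (pad_to M b)) / real (H M) \<le> real (H (Suc M)) / real (H M)"
      by (intro divide_right_mono) auto
  qed
  then show ?thesis using tendsto_le[OF _ H_Suc_ratio_tendsto Hval_pad_to_ratio_tendsto] by simp
qed

lemma next_block_in_Hs:
  assumes "{b'\<in>Hs L s. b < b'} \<noteq> {}"
  shows "next_block L s b \<in> Hs L s" "b < next_block L s b"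
    and "\<And>b'. b' \<in> Hs L s \<Longrightarrow> b < b' \<Longrightarrow> next_block L s b \<le> b'"
proof -
  have fin: "finite {b'\<in>Hs L s. b < b'}" using Hs_finite by simp
  show "next_block L s b \<in> Hs L s" "b < next_block L s b"
    using Min_in[OF fin assms] assms unfolding next_block_def by auto
  show "\<And>b'. b' \<in> Hs L s \<Longrightarrow> b < b' \<Longrightarrow> next_block L s b \<le> b'"
    using Min_le[OF fin] assms unfolding next_block_def by auto
qed

lemma dotH_next_block_bounds:
  assumes "1 \<le> s"
  shows "1 \<le> dotH L (next_block L s b)" "dotH L (next_block L s b) \<le> \<psi>"
proof (atomize (full), cases "{b'\<in>Hs L s. b < b'} = {}")
  case True
  then show "1 \<le> dotH L (next_block L s b) \<and> dotH L (next_block L s b) \<le> \<psi>"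
    using dotH_excl_block psi_gt_1 unfolding next_block_def by simp
next
  case False
  then show "1 \<le> dotH L (next_block L s b) \<and> dotH L (next_block L s b) \<le> \<psi>"
    using next_block_in_Hs(1) dotH_Hs_ge_1[OF assms] dotH_Hs_le_psi[OF assms] by blast
qed


lemma dotH_first_block: "dotH L (first_block s) = 1"
  using dotH_append_zeros[of "[1]" "max s N - 1"] unfolding first_block_def by (simp add: dotH_def)

lemma log_dotH_Hs_nonneg:
  assumes "1 \<le> s" "b \<in> Hs L s"
  shows "0 \<le> log \<psi> (dotH L b)"
  using dotH_Hs_ge_1[OF assms] psi_gt_1 by (simp add: zero_le_log_cancel_iff)

lemma log_dotH_next_block_le_1:
  assumes "1 \<le> s"
  shows "log \<psi> (dotH L (next_block L s b)) \<le> 1"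
proof -
  have "1 \<le> dotH L (next_block L s b)" "dotH L (next_block L s b) \<le> \<psi>"
    using dotH_next_block_bounds[OF assms] by auto
  then show ?thesis using log_le_cancel_iff[of \<psi> "dotH L (next_block L s b)" \<psi>] psi_gt_1 by simp
qed

lemma log_next_block_ratio:
  assumes "1 \<le> s" "b \<in> Hs L s"
  shows "log \<psi> (dotH L (next_block L s b) / dotH L b) =
           log \<psi> (dotH L (next_block L s b)) - log \<psi> (dotH L b)"
proof -
  have "0 < dotH L (next_block L s b)" "0 < dotH L b"
    using dotH_next_block_bounds(1)[OF assms(1), of b] dotH_Hs_ge_1[OF assms] by linarith+
  then show ?thesis using psi_gt_1 by (simp add: log_divide)
qed

lemma sum_log_next_block_ratio:
  assumes s: "1 \<le> s"
  shows "(\<Sum>b\<in>Hs L s. log \<psi> (dotH L (next_block L s b) / dotH L b)) = 1"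
proof -
  have "(\<Sum>b\<in>Hs L s. log \<psi> (dotH L (next_block L s b) / dotH L b)) =
      (\<Sum>b\<in>Hs L s. log \<psi> (dotH L (next_block L s b)) - log \<psi> (dotH L b))"
    using log_next_block_ratio[OF s] by simp
  also have "\<dots> = log \<psi> (dotH L (excl_block L s)) - log \<psi> (dotH L (Min (Hs L s)))"
    unfolding next_block_def using Hs_finite first_block_in_Hs[OF s]
    by (intro sum_next_diff_telescope) auto
  also have "\<dots> = 1" using dotH_excl_block Min_Hs[OF s] dotH_first_block psi_gt_1 by simp
  finally show ?thesis .
qed

lemma LB_eventually_eq_of_ratio:
  fixes U V :: real
  assumes s: "1 \<le> s" and b: "b \<in> Hs L s"
    and U: "dotH L b < U" and V: "V < dotH L (next_block L s b)"
  shows "eventually (\<lambda>M. \<forall>m \<ge> 1. length (Hexp L m) = M \<longrightarrow>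
           U * real (H M) \<le> real m \<longrightarrow> real m \<le> V * real (H M) \<longrightarrow> LB L s m = Some b) sequentially"
proof -
  define nb where "nb = next_block L s b"
  define larger where "larger \<longleftrightarrow> {b'\<in>Hs L s. b < b'} \<noteq> {}"
  have "eventually (\<lambda>M. real (Hval (pad_to M b)) / real (H M) < U) sequentially"
    using order_tendstoD(2)[OF Hval_pad_to_ratio_tendsto U] .
  moreover have "eventually (\<lambda>M. larger \<longrightarrow> V < real (Hval (pad_to M nb)) / real (H M)) sequentially"
    using order_tendstoD(1)[OF Hval_pad_to_ratio_tendsto V] unfolding nb_def
    by (cases larger) auto
  moreover have "eventually (\<lambda>M. max s N \<le> M) sequentially" by (rule eventually_ge_at_top)
  ultimately show ?thesis
  proof eventually_elim
    case (elim M)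
    then have M: "max s N \<le> M" by simp
    then have "real (H M) > 0" using s H_Suc_ge_1[of "M - 1"] by simp
    then have lo: "real (Hval (pad_to M b)) < U * real (H M)"
      and hi: "larger \<Longrightarrow> V * real (H M) < real (Hval (pad_to M nb))"
      using elim by (auto simp: divide_less_eq less_divide_eq)
    show ?case
    proof (intro allI impI)
      fix m :: nat
      assume m: "m \<ge> 1" "length (Hexp L m) = M" "U * real (H M) \<le> real m" "real m \<le> V * real (H M)"
      show "LB L s m = Some b"
      proof (rule LB_eqI[OF s m(1) m(2) M b])
        show "Hval (pad_to M b) \<le> m" using lo m(3) by simp
        fix b' assume b': "b' \<in> Hs L s" "b < b'"
        then have "larger" unfolding larger_def by blast
        then have "nb \<in> Hs L s" "nb \<le> b'" using next_block_in_Hs b' unfolding nb_def larger_def by auto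
        then have "pad_to M nb \<le> pad_to M b'"
          using Hs_length[of nb s] Hs_length[OF b'(1)]
            append_le_append_same_length[of nb b' "replicate (M - max s N) 0"]
          unfolding pad_to_def by simp
        then have "Hval (pad_to M nb) \<le> Hval (pad_to M b')"
          using Hs_pad_to[OF \<open>nb \<in> Hs L s\<close> s M] Hs_pad_to[OF b'(1) s M] unfolding Hset_def
          by (intro Hcirc_Hval_mono) auto
        then show "m < Hval (pad_to M b')" using hi[OF \<open>larger\<close>] m(4) by simp
      qed
    qed
  qed
qed

lemma LB_eventually_eq_of_log_ratio:
  assumes s: "1 \<le> s" and b: "b \<in> Hs L s" and \<epsilon>: "\<epsilon> > 0"
  shows "eventually (\<lambda>M. \<forall>m \<ge> 1. length (Hexp L m) = M \<longrightarrow>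
           log \<psi> (dotH L b) + \<epsilon> < log \<psi> (real m / real (H M)) \<longrightarrow>
           log \<psi> (real m / real (H M)) < log \<psi> (dotH L (next_block L s b)) - \<epsilon> \<longrightarrow>
           LB L s m = Some b) sequentially"
proof -
  have b_pos: "dotH L b > 0" and nb_pos: "dotH L (next_block L s b) > 0"
    using dotH_Hs_ge_1[OF s b] dotH_next_block_bounds(1)[OF s, of b] by auto
  define U where "U = dotH L b * \<psi> powr \<epsilon>"
  define V where "V = dotH L (next_block L s b) * \<psi> powr (- \<epsilon>)"
  have U: "U > 0" "log \<psi> U = log \<psi> (dotH L b) + \<epsilon>"
    and V: "V > 0" "log \<psi> V = log \<psi> (dotH L (next_block L s b)) - \<epsilon>"
    unfolding U_def V_def using b_pos nb_pos psi_gt_1 by (simp_all add: log_mult_pos log_powr_cancel)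
  have "dotH L b < U" unfolding U_def using b_pos psi_gt_1 \<epsilon> by simp
  moreover have "V < dotH L (next_block L s b)"
    unfolding V_def using nb_pos psi_gt_1 \<epsilon> powr_less_mono[of "- \<epsilon>" 0 \<psi>] by simp
  ultimately have "eventually (\<lambda>M. \<forall>m \<ge> 1. length (Hexp L m) = M \<longrightarrow>
      U * real (H M) \<le> real m \<longrightarrow> real m \<le> V * real (H M) \<longrightarrow> LB L s m = Some b) sequentially"
    by (rule LB_eventually_eq_of_ratio[OF s b])
  moreover have "eventually (\<lambda>M. M \<ge> 1) sequentially" by (rule eventually_ge_at_top)
  ultimately show ?thesis
  proof eventually_elim
    case (elim M)
    have HM: "real (H M) > 0" using elim(2) H_Suc_ge_1[of "M - 1"] by simp
    show ?case
    proof (intro allI impI)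
      fix m :: nat
      assume m: "m \<ge> 1" "length (Hexp L m) = M"
        and lo: "log \<psi> (dotH L b) + \<epsilon> < log \<psi> (real m / real (H M))"
        and hi: "log \<psi> (real m / real (H M)) < log \<psi> (dotH L (next_block L s b)) - \<epsilon>"
      have r: "real m / real (H M) > 0" using m(1) HM by simp
      have "U < real m / real (H M)"
        using lo U log_less_cancel_iff[of \<psi> U "real m / real (H M)"] r psi_gt_1 by simp
      moreover have "real m / real (H M) < V"
        using hi V log_less_cancel_iff[of \<psi> "real m / real (H M)" V] r psi_gt_1 by simp
      ultimately have "U * real (H M) \<le> real m" "real m \<le> V * real (H M)"
        using HM by (simp_all add: pos_less_divide_eq pos_divide_less_eq)
      then show "LB L s m = Some b" using elim(1) m by blast
    qed
  qed
qed

end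

section \<open>Floors of powers\<close>

locale floor_powers = admissible_tuple +
  fixes \<gamma> :: real
  assumes gamma_gt_1: "\<gamma> > 1" and log_gamma_irrational: "log \<psi> \<gamma> \<notin> \<rat>"
begin

definition K :: "nat \<Rightarrow> nat" where "K k = nat \<lfloor>\<gamma> ^ k\<rfloor>"

definition Klen :: "nat \<Rightarrow> nat" where "Klen k = length (Hexp L (K k))"

text \<open>The orbit whose fractional parts approximate log_psi (K k / H (Klen k)).\<close>

definition orbit :: "nat \<Rightarrow> real" where "orbit k = real k * log \<psi> \<gamma> - log \<psi> Hconst"

definition Kerr :: "nat \<Rightarrow> real" where
  "Kerr k = log \<psi> (Hnorm (Klen k)) - log \<psi> Hconst - log \<psi> (real (K k) / \<gamma> ^ k)"

lemma K_bounds: "\<gamma> ^ k - 1 < real (K k)" "real (K k) \<le> \<gamma> ^ k"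
proof -
  have "\<lfloor>\<gamma> ^ k\<rfloor> \<ge> 0" using gamma_gt_1 by simp
  then have "real (K k) = of_int \<lfloor>\<gamma> ^ k\<rfloor>" unfolding K_def by simp
  then show "\<gamma> ^ k - 1 < real (K k)" "real (K k) \<le> \<gamma> ^ k" by linarith+
qed

lemma K_ge_1: "K k \<ge> 1"
proof -
  have "\<gamma> ^ k \<ge> 1" using gamma_gt_1 by simp
  then have "\<lfloor>\<gamma> ^ k\<rfloor> \<ge> 1" by (simp add: le_floor_iff)
  then show ?thesis unfolding K_def by arith
qed

lemma K_ratio_tendsto: "(\<lambda>k. real (K k) / \<gamma> ^ k) \<longlonglongrightarrow> 1"
proof (rule tendsto_sandwich)
  show "eventually (\<lambda>k. 1 - (1 / \<gamma>) ^ k \<le> real (K k) / \<gamma> ^ k) sequentially"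
  proof (intro always_eventually allI)
    fix k
    have "\<gamma> ^ k > 0" using gamma_gt_1 by simp
    then have "(\<gamma> ^ k - 1) / \<gamma> ^ k \<le> real (K k) / \<gamma> ^ k"
      using K_bounds[of k] by (intro divide_right_mono) auto
    then show "1 - (1 / \<gamma>) ^ k \<le> real (K k) / \<gamma> ^ k"
      using \<open>\<gamma> ^ k > 0\<close> gamma_gt_1 by (simp add: diff_divide_distrib power_one_over)
  qed
  show "eventually (\<lambda>k. real (K k) / \<gamma> ^ k \<le> 1) sequentially"
    using K_bounds gamma_gt_1 by (intro always_eventually allI) simp
  have "(\<lambda>k. (1 / \<gamma>) ^ k) \<longlonglongrightarrow> 0" using gamma_gt_1 by (intro LIMSEQ_power_zero) auto
  then show "(\<lambda>k. 1 - (1 / \<gamma>) ^ k) \<longlonglongrightarrow> 1" using tendsto_diff[of "\<lambda>_. 1" 1 sequentially] by force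
qed simp

lemma Klen_bounds: "H (Klen k) \<le> K k" "K k < H (Suc (Klen k))" "Klen k \<ge> 1"
  using Hexp_in_Hset[OF K_ge_1] Hval_Hexp[OF K_ge_1] Hset_Hval_bounds Hset_length_ge_1
  unfolding Klen_def by force+

lemma H_Klen_pos: "real (H (Klen k)) > 0"
  using Klen_bounds(3)[of k] H_Suc_ge_1[of "Klen k - 1"] by simp

lemma Klen_tendsto: "filterlim Klen at_top sequentially"
  unfolding filterlim_at_top
proof
  fix Z :: nat
  obtain k0 where k0: "real (H (Suc Z)) < \<gamma> ^ k0" using real_arch_pow[OF gamma_gt_1] by blast
  show "eventually (\<lambda>k. Z \<le> Klen k) sequentially"
    unfolding eventually_sequentially
  proof (intro exI[of _ k0] allI impI)
    fix k assume "k0 \<le> k"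
    then have "\<gamma> ^ k0 \<le> \<gamma> ^ k" using gamma_gt_1 by (intro power_increasing) auto
    then have "H (Suc Z) \<le> K k" using k0 K_bounds[of k] by linarith
    then show "Z \<le> Klen k" using Klen_bounds(2)[of k] H_mono[of "Suc (Klen k)" "Suc Z"] by fastforce
  qed
qed

lemma Kerr_tendsto: "Kerr \<longlonglongrightarrow> 0"
proof -
  have "(\<lambda>k. Hnorm (Klen k)) \<longlonglongrightarrow> Hconst" by (rule filterlim_compose[OF Hnorm_tendsto Klen_tendsto])
  then have "Kerr \<longlonglongrightarrow> log \<psi> Hconst - log \<psi> Hconst - log \<psi> 1"
    unfolding Kerr_def using psi_gt_1 Hconst_pos by (intro tendsto_intros K_ratio_tendsto) auto
  then show ?thesis by simp
qed

text \<open>Since H M = Hnorm M * psi ^ M, taking log_psi of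
  K k = gamma ^ k * (K k / gamma ^ k) = (K k / H M) * Hnorm M * psi ^ M with M = Klen k.\<close>

lemma orbit_decomp: "orbit k = real (Klen k) + log \<psi> (real (K k) / real (H (Klen k))) + Kerr k"
proof -
  define m where "m = real (K k)"
  define M where "M = Klen k"
  have m: "m > 0" unfolding m_def using K_ge_1[of k] by simp
  have HM: "real (H M) > 0" unfolding M_def by (rule H_Klen_pos)
  have Hnorm: "Hnorm M > 0" unfolding Hnorm_def using HM theta_pos by simp
  have g: "\<gamma> ^ k > 0" using gamma_gt_1 by simp
  have "log \<psi> (\<gamma> ^ k * (m / \<gamma> ^ k)) = log \<psi> (\<gamma> ^ k) + log \<psi> (m / \<gamma> ^ k)"
    using g m by (intro log_mult_pos) auto
  then have A: "log \<psi> m = real k * log \<psi> \<gamma> + log \<psi> (m / \<gamma> ^ k)"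
    using g gamma_gt_1 by (simp add: log_nat_power)
  have "real (H M) = Hnorm M * \<psi> ^ M"
    unfolding Hnorm_def using psi_mult_theta by (simp add: mult.assoc power_mult_distrib[symmetric] mult.commute)
  then have "log \<psi> m = log \<psi> ((m / real (H M)) * Hnorm M * \<psi> ^ M)" using HM Hnorm psi_gt_1 by simp
  also have "\<dots> = log \<psi> ((m / real (H M)) * Hnorm M) + log \<psi> (\<psi> ^ M)"
    using m HM Hnorm psi_gt_1 by (intro log_mult_pos) auto
  also have "log \<psi> ((m / real (H M)) * Hnorm M) = log \<psi> (m / real (H M)) + log \<psi> (Hnorm M)"
    using m HM Hnorm by (intro log_mult_pos) auto
  also have "log \<psi> (\<psi> ^ M) = real M" using psi_gt_1 by (simp add: log_pow_cancel)
  finally show ?thesis using A unfolding orbit_def Kerr_def m_def[symmetric] M_def[symmetric] by simp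
qed

text \<open>Away from the integers, the fractional part of the orbit is log_psi (K k / H (Klen k))
  up to the vanishing error Kerr k; near the integers Klen k could be off by one.\<close>

lemma log_ratio_near_frac_orbit:
  assumes \<epsilon>: "\<epsilon> > 0"
  shows "eventually (\<lambda>k. \<epsilon> \<le> frac (orbit k) \<and> frac (orbit k) \<le> 1 - \<epsilon> \<longrightarrow>
           \<bar>log \<psi> (real (K k) / real (H (Klen k))) - frac (orbit k)\<bar> < \<epsilon> / 2) sequentially"
proof -
  have "\<psi> < \<psi> powr (1 + \<epsilon> / 2)"
    using psi_gt_1 \<epsilon> powr_less_mono[of 1 "1 + \<epsilon> / 2" \<psi>] by simp
  then have "eventually (\<lambda>M. real (H (Suc M)) / real (H M) < \<psi> powr (1 + \<epsilon> / 2)) sequentially"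
    by (rule order_tendstoD(2)[OF H_Suc_ratio_tendsto])
  then have "eventually (\<lambda>k. real (H (Suc (Klen k))) / real (H (Klen k)) < \<psi> powr (1 + \<epsilon> / 2)) sequentially"
    using Klen_tendsto unfolding filterlim_iff by blast
  moreover have "eventually (\<lambda>k. \<bar>Kerr k\<bar> < \<epsilon> / 2) sequentially"
    using tendstoD[OF Kerr_tendsto, of "\<epsilon> / 2"] \<epsilon> by (simp add: dist_real_def)
  ultimately show ?thesis
  proof eventually_elim
    case (elim k)
    define t where "t = log \<psi> (real (K k) / real (H (Klen k)))"
    have "real (K k) / real (H (Klen k)) < real (H (Suc (Klen k))) / real (H (Klen k))"
      using Klen_bounds(2)[of k] H_Klen_pos[of k] by (intro divide_strict_right_mono) auto
    then have ratio: "1 \<le> real (K k) / real (H (Klen k))"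
      "real (K k) / real (H (Klen k)) < \<psi> powr (1 + \<epsilon> / 2)"
      using Klen_bounds(1)[of k] H_Klen_pos[of k] elim(1) by auto
    have t: "0 \<le> t" "t < 1 + \<epsilon> / 2"
      using ratio psi_gt_1 unfolding t_def by (auto simp: log_less_iff)
    show ?case
    proof
      assume f: "\<epsilon> \<le> frac (orbit k) \<and> frac (orbit k) \<le> 1 - \<epsilon>"
      have decomp: "orbit k = real (Klen k) + t + Kerr k" unfolding t_def by (rule orbit_decomp)
      have "of_int \<lfloor>orbit k\<rfloor> = orbit k - frac (orbit k)" unfolding frac_def by simp
      then have "of_int \<lfloor>orbit k\<rfloor> > real (Klen k) - 1" "of_int \<lfloor>orbit k\<rfloor> < real (Klen k) + 1"
        using decomp f t elim(2) by auto
      then have "\<lfloor>orbit k\<rfloor> = int (Klen k)" by linarith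
      then have "t = frac (orbit k) - Kerr k" using decomp unfolding frac_def by simp
      then show "\<bar>log \<psi> (real (K k) / real (H (Klen k))) - frac (orbit k)\<bar> < \<epsilon> / 2"
        using elim(2) unfolding t_def by simp
    qed
  qed
qed


lemma LB_K_eventually_eq:
  assumes s: "1 \<le> s" and b: "b \<in> Hs L s" and \<epsilon>: "\<epsilon> > 0"
  shows "eventually (\<lambda>k. log \<psi> (dotH L b) + \<epsilon> \<le> frac (orbit k) \<and>
           frac (orbit k) \<le> log \<psi> (dotH L (next_block L s b)) - \<epsilon> \<longrightarrow> LB L s (K k) = Some b) sequentially"
proof -
  have "eventually (\<lambda>M. \<forall>m \<ge> 1. length (Hexp L m) = M \<longrightarrow>
      log \<psi> (dotH L b) + \<epsilon> / 2 < log \<psi> (real m / real (H M)) \<longrightarrow>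
      log \<psi> (real m / real (H M)) < log \<psi> (dotH L (next_block L s b)) - \<epsilon> / 2 \<longrightarrow>
      LB L s m = Some b) sequentially"
    using LB_eventually_eq_of_log_ratio[OF s b] \<epsilon> by simp
  then have "eventually (\<lambda>k. \<forall>m \<ge> 1. length (Hexp L m) = Klen k \<longrightarrow>
      log \<psi> (dotH L b) + \<epsilon> / 2 < log \<psi> (real m / real (H (Klen k))) \<longrightarrow>
      log \<psi> (real m / real (H (Klen k))) < log \<psi> (dotH L (next_block L s b)) - \<epsilon> / 2 \<longrightarrow>
      LB L s m = Some b) sequentially"
    using Klen_tendsto unfolding filterlim_iff by blast
  moreover have "eventually (\<lambda>k. \<epsilon> \<le> frac (orbit k) \<and> frac (orbit k) \<le> 1 - \<epsilon> \<longrightarrow>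
      \<bar>log \<psi> (real (K k) / real (H (Klen k))) - frac (orbit k)\<bar> < \<epsilon> / 2) sequentially"
    by (rule log_ratio_near_frac_orbit[OF \<epsilon>])
  ultimately show ?thesis
  proof eventually_elim
    case (elim k)
    have lo: "log \<psi> (dotH L b) \<ge> 0" and hi: "log \<psi> (dotH L (next_block L s b)) \<le> 1"
      using log_dotH_Hs_nonneg[OF s b] log_dotH_next_block_le_1[OF s] .
    show ?case
    proof
      assume f: "log \<psi> (dotH L b) + \<epsilon> \<le> frac (orbit k) \<and>
          frac (orbit k) \<le> log \<psi> (dotH L (next_block L s b)) - \<epsilon>"
      then have "\<bar>log \<psi> (real (K k) / real (H (Klen k))) - frac (orbit k)\<bar> < \<epsilon> / 2"
        using elim(2) lo hi by auto
      then have "log \<psi> (dotH L b) + \<epsilon> / 2 < log \<psi> (real (K k) / real (H (Klen k)))"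
        "log \<psi> (real (K k) / real (H (Klen k))) < log \<psi> (dotH L (next_block L s b)) - \<epsilon> / 2"
        using f unfolding abs_less_iff by linarith+
      then show "LB L s (K k) = Some b" using elim(1) K_ge_1[of k] unfolding Klen_def by blast
    qed
  qed
qed

definition block_count :: "nat \<Rightarrow> nat list \<Rightarrow> nat \<Rightarrow> nat" where
  "block_count s b n = card {k\<in>{1..n}. LB L s (K k) = Some b}"

lemma block_frequency_lower:
  assumes s: "1 \<le> s" and b: "b \<in> Hs L s" and \<epsilon>: "\<epsilon> > 0"
  shows "eventually (\<lambda>n. log \<psi> (dotH L (next_block L s b) / dotH L b) - \<epsilon>
           \<le> real (block_count s b n) / real n) sequentially"
proof -
  define lo where "lo = log \<psi> (dotH L b)"
  define hi where "hi = log \<psi> (dotH L (next_block L s b))"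
  define \<delta> where "\<delta> = \<epsilon> / 4"
  have \<delta>: "\<delta> > 0" unfolding \<delta>_def using \<epsilon> by simp
  have len: "log \<psi> (dotH L (next_block L s b) / dotH L b) = hi - lo"
    unfolding lo_def hi_def using log_next_block_ratio[OF s b] .
  have lo: "lo \<ge> 0" and hi: "hi \<le> 1"
    unfolding lo_def hi_def using log_dotH_Hs_nonneg[OF s b] log_dotH_next_block_le_1[OF s] .
  obtain k0 where k0: "\<And>k. k \<ge> k0 \<Longrightarrow> lo + \<delta> \<le> frac (orbit k) \<and> frac (orbit k) \<le> hi - \<delta> \<Longrightarrow>
      LB L s (K k) = Some b"
    using LB_K_eventually_eq[OF s b \<delta>] unfolding eventually_sequentially lo_def hi_def by blast
  show ?thesis
  proof (cases "lo + \<delta> \<le> hi - \<delta>")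
    case False
    then have "hi - lo - \<epsilon> \<le> 0" using \<epsilon> unfolding \<delta>_def by linarith
    then show ?thesis unfolding len
      by (intro always_eventually allI) (meson divide_nonneg_nonneg of_nat_0_le_iff order_trans)
  next
    case True
    have "eventually (\<lambda>n. real n * ((hi - \<delta>) - (lo + \<delta>) - \<delta>) \<le>
        real (card {k\<in>{..<n}. lo + \<delta> \<le> frac (orbit k) \<and> frac (orbit k) \<le> hi - \<delta>})) sequentially"
      using irrational_orbit_interval_count[OF log_gamma_irrational, of "lo + \<delta>" "hi - \<delta>" \<delta>
          "- log \<psi> Hconst"] True lo hi \<delta> unfolding orbit_def by auto
    moreover have "eventually (\<lambda>n. real (k0 + 1) / \<delta> \<le> real n) sequentially"
      by (rule eventually_sequentiallyI[of "nat \<lceil>real (k0 + 1) / \<delta>\<rceil>"]) linarith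
    moreover have "eventually (\<lambda>n. n \<ge> 1) sequentially" by (rule eventually_ge_at_top)
    ultimately show ?thesis
    proof eventually_elim
      case (elim n)
      have "card {k\<in>{..<n}. lo + \<delta> \<le> frac (orbit k) \<and> frac (orbit k) \<le> hi - \<delta>}
          \<le> Suc k0 + block_count s b n"
        unfolding block_count_def using k0 by (intro card_lessThan_le_of_eventually_imp) auto
      then have "real n * (hi - lo - 3 * \<delta>) \<le> real (k0 + 1) + real (block_count s b n)"
        using elim(1) by (simp add: algebra_simps)
      moreover have "real (k0 + 1) \<le> real n * \<delta>" using elim(2) \<delta> by (simp add: field_simps)
      ultimately have "real n * (hi - lo - \<epsilon>) \<le> real (block_count s b n)"
        unfolding \<delta>_def by (simp add: algebra_simps)
      then show ?case unfolding len using elim(3) by (simp add: field_simps)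
    qed
  qed
qed

lemma strong_benford_K: "strong_benford L K"
  unfolding strong_benford_def
proof (intro allI impI ballI)
  fix s b assume s: "1 \<le> s" and b: "b \<in> Hs L s"
  have "(\<lambda>n. real (block_count s b n) / real n) \<longlonglongrightarrow> log \<psi> (dotH L (next_block L s b) / dotH L b)"
  proof (rule tendsto_of_frequency_lower_bounds[OF Hs_finite b sum_log_next_block_ratio[OF s]])
    fix n :: nat
    have "(\<Sum>b\<in>Hs L s. block_count s b n) \<le> n"
      unfolding block_count_def by (rule sum_card_fibres_le[OF Hs_finite])
    then have "(\<Sum>b\<in>Hs L s. real (block_count s b n)) \<le> real n"
      by (metis of_nat_le_iff of_nat_sum)
    then show "(\<Sum>b\<in>Hs L s. real (block_count s b n) / real n) \<le> 1"
      unfolding sum_divide_distrib[symmetric] by (cases "n = 0") (simp_all add: divide_le_eq)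
  next
    fix b' :: "nat list" and \<epsilon> :: real
    assume "b' \<in> Hs L s" "\<epsilon> > 0"
    then show "eventually (\<lambda>n. log \<psi> (dotH L (next_block L s b') / dotH L b') - \<epsilon>
        \<le> real (block_count s b' n) / real n) sequentially"
      by (rule block_frequency_lower[OF s])
  qed
  then show "(\<lambda>n. real (card {k \<in> {1..n}. LB L s (K k) = Some b}) / real n) \<longlonglongrightarrow>
      log \<psi> (dotH L (next_block L s b) / dotH L b)"
    unfolding block_count_def .
qed

end

theorem theorem6p16:
  fixes \<gamma> :: real
  assumes "\<gamma> > 1"
    and "\<forall>L. admissible L \<longrightarrow> (\<forall>r::rat. \<gamma> \<noteq> psiL L powr (of_rat r))"
  shows "absolute_benford (\<lambda>n. nat \<lfloor>\<gamma> ^ n\<rfloor>)"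
  unfolding absolute_benford_def
proof (intro allI impI)
  fix L assume L: "admissible L"
  interpret admissible_tuple L by unfold_locales (rule L)
  have "log \<psi> \<gamma> \<notin> \<rat>"
  proof
    assume "log \<psi> \<gamma> \<in> \<rat>"
    then obtain r where "log \<psi> \<gamma> = of_rat r" by (auto elim: Rats_cases)
    moreover have "\<psi> powr (log \<psi> \<gamma>) = \<gamma>" using assms(1) psi_gt_1 by (intro powr_log_cancel) auto
    ultimately have "\<gamma> = \<psi> powr (of_rat r)" by simp
    then show False using assms(2) L by blast
  qed
  then interpret floor_powers L \<gamma> using assms(1) by unfold_locales auto
  show "strong_benford L (\<lambda>n. nat \<lfloor>\<gamma> ^ n\<rfloor>)" using strong_benford_K unfolding K_def[abs_def] .
qed

end
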